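(* Let $n\ge1$, let $L^n_\epsilon\colon S^n\to\mathcal{P}^n$ be the Lagrangian immersions described in the context (defined for all sufficiently small $\epsilon>0$), and set $\iota_\epsilon=\mathrm{Arg}\circ L^n_\epsilon\colon S^n\to M_{\mathbb{R}}/2\pi M$. Let $q\colon\partial Z_n\to M_{\mathbb{R}}/2\pi M$ be the map $x\mapsto \pi x \bmod 2\pi M$ (i.e. the inclusion of $\partial(\pi Z_n)$). Then there exist homotopy equivalences $p_\epsilon\colon S^n\to\partial Z_n$, defined for all sufficiently small $\epsilon>0$, such that \[\lim_{\epsilon\to0}\|\iota_\epsilon-q\circ p_\epsilon\|_{C^0}=0.\]
   Context: $\widetilde{M}=\mathbb{Z}\langle e_1,\dots,e_{n+2}\rangle$, $M=\widetilde{M}/\langle e_1+\dots+e_{n+2}\rangle$, $M_{\mathbb{R}}=M\otimes\mathbb{R}$; $\mathrm{Arg}\colon\mathbb{CP}^{n+1}\setminus\bigcup_j\{z_j=0\}\to M_{\mathbb{R}}/2\pi M$ is induced by $(z_j)\mapsto(\arg z_j)$; $C^0$-distances are taken with respect to a flat metric on the torus $M_{\mathbb{R}}/2\pi M$. $Z_n=\{\sum_j\theta_je_j:\theta_j\in[0,1]\}\subset M_{\mathbb{R}}$ and $\partial Z_n$ its boundary. $\mathcal{P}^n=\{[z]\in\mathbb{CP}^{n+1}:\sum_jz_j=0,\ z_j\neq0\ \forall j\}$. Construction of $L^n_\epsilon$: $\mathbb{CP}^n:=\{\sum_jz_j=0\}\subset\mathbb{CP}^{n+1}$, $\mathbb{RP}^n$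 its real points, $S^n=\{x\in\mathbb{R}^{n+2}:\sum x_j=0,\sum x_j^2=1\}$ double covering $\mathbb{RP}^n$. Fix an $S_{n+2}\times\mathbb{Z}_2$-equivariant symplectic embedding of a small disk cotangent bundle $D^*_\eta\mathbb{RP}^n$ onto a neighbourhood of $\mathbb{RP}^n$ in $\mathbb{CP}^n$ ($\mathbb{Z}_2$ acting by complex conjugation and by negating covectors), holomorphic along the zero section (with respect to the almost complex structure induced by the round metric), and compose with the double cover to get $i\colon D^*_\eta S^n\to\mathbb{CP}^n$. Fix $0<\delta\ll1$ and a smooth odd $g\colon\mathbb{R}\to\mathbb{R}$ with $g'>0$, $g(x)=x$ for $|x|<\delta$, $g'(x)$ strictly decreasing in $|x|$ for $|x|>\delta$, $g'(x)<\delta$ for $|x|>2\delta$; $f=\sum_j g(x_j)|_{S^n}$. For $\epsilon>0$ small, $L^n_\epsilon=i\circ(\text{graph of }\epsilon\,df)$, a Lagrangian immersion with image in $\mathcal{P}^n$. *)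

theory Defs
  imports "HOL-Analysis.Analysis"
begin

fun Ck_on :: "nat \<Rightarrow> 'a::real_normed_vector set \<Rightarrow> ('a \<Rightarrow> 'b::real_normed_vector) \<Rightarrow> bool" where
  "Ck_on 0 U f = continuous_on U f"
| "Ck_on (Suc k) U f =
     ((\<forall>x\<in>U. f differentiable (at x)) \<and> (\<forall>v. Ck_on k U (\<lambda>x. frechet_derivative f (at x) v)))"

definition smooth_on :: "'a::real_normed_vector set \<Rightarrow> ('a \<Rightarrow> 'b::real_normed_vector) \<Rightarrow> bool" where
  "smooth_on U f \<longleftrightarrow> open U \<and> (\<forall>k. Ck_on k U f)"

definition homotopy_equivalence_map :: "'a topology \<Rightarrow> 'b topology \<Rightarrow> ('a \<Rightarrow> 'b) \<Rightarrow> bool" where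
  "homotopy_equivalence_map X Y f \<longleftrightarrow> continuous_map X Y f \<and>
     (\<exists>g. continuous_map Y X g \<and>
          homotopic_with (\<lambda>x. True) X X (g \<circ> f) id \<and>
          homotopic_with (\<lambda>x. True) Y Y (f \<circ> g) id)"

section \<open>The set-up: index type 'k with CARD('k) = n+2\<close>

definition ones :: "real^'k" where "ones = (\<chi> j. 1)"

definition sphereS :: "(real^'k) set" where
  "sphereS = {x. sum (\<lambda>j. x$j) UNIV = 0 \<and> x \<bullet> x = 1}"

text \<open>Disk cotangent bundle of S^n (covectors identified with tangent vectors by the round metric).\<close>
definition diskT :: "real \<Rightarrow> ((real^'k) \<times> (real^'k)) set" where
  "diskT \<eta> = {(x, \<xi>). x \<in> sphereS \<and> \<xi> \<bullet> x = 0 \<and> sum (\<lambda>j. \<xi>$j) UNIV = 0 \<and> norm \<xi> < \<eta>}"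

definition tangentT :: "(real^'k) \<times> (real^'k) \<Rightarrow> ((real^'k) \<times> (real^'k)) set" where
  "tangentT p = {(a, b). a \<bullet> fst p = 0 \<and> sum (\<lambda>j. a$j) UNIV = 0 \<and> sum (\<lambda>j. b$j) UNIV = 0
                   \<and> b \<bullet> fst p + snd p \<bullet> a = 0}"

text \<open>Canonical symplectic form sum dx_j /\ dxi_j, and the compatible almost complex structure
  induced by the round metric along the zero section (horizontal a to vertical a).\<close>
definition omega_can :: "(real^'k) \<times> (real^'k) \<Rightarrow> (real^'k) \<times> (real^'k) \<Rightarrow> real" where
  "omega_can u v = fst u \<bullet> snd v - snd u \<bullet> fst v"

definition J_can :: "(real^'k) \<times> (real^'k) \<Rightarrow> (real^'k) \<times> (real^'k)" where
  "J_can u = (- snd u, fst u)"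

text \<open>Hermitian product and the Fubini--Study form written on a lift z in C^(n+2) - 0.\<close>
definition hprod :: "complex^'k \<Rightarrow> complex^'k \<Rightarrow> complex" where
  "hprod a b = (\<Sum>j\<in>UNIV. a$j * cnj (b$j))"

definition omega_FS :: "complex^'k \<Rightarrow> complex^'k \<Rightarrow> complex^'k \<Rightarrow> real" where
  "omega_FS z u v =
     Im (hprod v u * hprod z z - hprod v z * hprod z u) / (Re (hprod z z))^2"

text \<open>Equality of points of projective space represented by nonzero lifts.\<close>
definition proj_eq :: "complex^'k \<Rightarrow> complex^'k \<Rightarrow> bool" where
  "proj_eq z w \<longleftrightarrow> z \<noteq> 0 \<and> w \<noteq> 0 \<and> (\<exists>c. c \<noteq> 0 \<and> w = c *s z)"

definition cvec :: "real^'k \<Rightarrow> complex^'k" where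
  "cvec x = (\<chi> j. complex_of_real (x$j))"

definition cconj :: "complex^'k \<Rightarrow> complex^'k" where
  "cconj z = (\<chi> j. cnj (z$j))"

definition permv :: "('k \<Rightarrow> 'k) \<Rightarrow> 'a^'k \<Rightarrow> 'a^'k" where
  "permv \<sigma> v = (\<chi> j. v $ \<sigma> j)"

text \<open>Admissible lifts I : D*_eta S^n -> C^(n+2) - 0 of the map i : D*_eta S^n -> CP^n
  (composite of an S_(n+2) x Z_2-equivariant symplectic embedding of D*_eta RP^n, holomorphic
  along the zero section, with the double cover).\<close>
definition admissible_lift :: "real \<Rightarrow> ((real^'k) \<times> (real^'k) \<Rightarrow> complex^'k) \<Rightarrow> bool" where
  "admissible_lift \<eta> I \<longleftrightarrow> \<eta> > 0 \<and>
     (\<exists>U. diskT \<eta> \<subseteq> U \<and> smooth_on U I) \<and>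
     (\<forall>p\<in>diskT \<eta>. I p \<noteq> 0 \<and> sum (\<lambda>j. I p $ j) UNIV = 0) \<and>
     \<comment> \<open>factors through the double cover, and is injective on D*_eta RP^n\<close>
     (\<forall>x \<xi>. (x, \<xi>) \<in> diskT \<eta> \<longrightarrow> proj_eq (I (x, \<xi>)) (I (- x, - \<xi>))) \<and>
     (\<forall>p\<in>diskT \<eta>. \<forall>q\<in>diskT \<eta>. proj_eq (I p) (I q) \<longrightarrow> q = p \<or> q = - p) \<and>
     \<comment> \<open>image is a neighbourhood (open set) of RP^n in CP^n, zero section goes to RP^n\<close>
     openin (top_of_set {z::complex^'k. sum (\<lambda>j. z$j) UNIV = 0})
        {c *s I p | c p. c \<noteq> 0 \<and> p \<in> diskT \<eta>} \<and>
     (\<forall>x\<in>sphereS. proj_eq (cvec x) (I (x, 0))) \<and>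
     \<comment> \<open>symplectic\<close>
     (\<forall>p\<in>diskT \<eta>. \<forall>u\<in>tangentT p. \<forall>v\<in>tangentT p.
        omega_FS (I p) (frechet_derivative I (at p) u) (frechet_derivative I (at p) v)
          = omega_can u v) \<and>
     \<comment> \<open>holomorphic along the zero section\<close>
     (\<forall>x\<in>sphereS. \<forall>u\<in>tangentT (x, 0).
        frechet_derivative I (at (x, 0)) (J_can u) - \<i> *s frechet_derivative I (at (x, 0)) u
          \<in> {c *s I (x, 0) | c. True}) \<and>
     \<comment> \<open>S_(n+2) x Z_2 equivariance\<close>
     (\<forall>\<sigma> x \<xi>. bij \<sigma> \<longrightarrow> (x, \<xi>) \<in> diskT \<eta> \<longrightarrow>
        proj_eq (permv \<sigma> (I (x, \<xi>))) (I (permv \<sigma> x, permv \<sigma> \<xi>))) \<and>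
     (\<forall>x \<xi>. (x, \<xi>) \<in> diskT \<eta> \<longrightarrow> proj_eq (cconj (I (x, \<xi>))) (I (x, - \<xi>)))"

definition admissible_g :: "real \<Rightarrow> (real \<Rightarrow> real) \<Rightarrow> bool" where
  "admissible_g \<delta> g \<longleftrightarrow> smooth_on UNIV g \<and> (\<forall>x. g (- x) = - g x) \<and>
     (\<forall>x. deriv g x > 0) \<and> (\<forall>x. \<bar>x\<bar> < \<delta> \<longrightarrow> g x = x) \<and>
     (\<forall>x y. \<delta> < \<bar>x\<bar> \<and> \<bar>x\<bar> < \<bar>y\<bar> \<longrightarrow> deriv g y < deriv g x) \<and>
     (\<forall>x. \<bar>x\<bar> > 2 * \<delta> \<longrightarrow> deriv g x < \<delta>)"

text \<open>Gradient (w.r.t. the round metric) of f = sum_j g(x_j) restricted to S^n; this is the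
  covector df under the metric identification.\<close>
definition grad_f :: "(real \<Rightarrow> real) \<Rightarrow> real^'k \<Rightarrow> real^'k" where
  "grad_f g x = (let w = ((\<chi> j. deriv g (x$j)) :: real^'k) in
      w - (w \<bullet> x) *\<^sub>R x - ((w \<bullet> ones) / ((ones::real^'k) \<bullet> ones)) *\<^sub>R ones)"

text \<open>The Lagrangian immersion L_eps, represented by its lift.\<close>
definition Lift_L :: "((real^'k) \<times> (real^'k) \<Rightarrow> complex^'k) \<Rightarrow> (real \<Rightarrow> real) \<Rightarrow> real \<Rightarrow> real^'k \<Rightarrow> complex^'k" where
  "Lift_L I g \<epsilon> x = I (x, \<epsilon> *\<^sub>R grad_f g x)"

text \<open>Arg, with values represented in R^(n+2); the torus M_R / 2 pi M is R^(n+2) modulo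
  2 pi Z^(n+2) + R(1,...,1).\<close>
definition ArgV :: "complex^'k \<Rightarrow> real^'k" where
  "ArgV z = (\<chi> j. Arg (z$j))"

definition tor_dist :: "real^'k \<Rightarrow> real^'k \<Rightarrow> real" where
  "tor_dist a b = Inf {norm (a - b - (2 * pi) *\<^sub>R (\<chi> j. of_int (k j)) - t *\<^sub>R ones) | k t. True}"

text \<open>M_R realised as the hyperplane sum = 0 (orthogonal complement of ones), with projection Pm.\<close>
definition MR :: "(real^'k) set" where
  "MR = {x. sum (\<lambda>j. x$j) UNIV = 0}"

definition Pm :: "real^'k \<Rightarrow> real^'k" where
  "Pm \<theta> = \<theta> - ((\<theta> \<bullet> ones) / ((ones::real^'k) \<bullet> ones)) *\<^sub>R ones"

definition Zn :: "(real^'k) set" where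
  "Zn = Pm ` {\<theta>. \<forall>j. 0 \<le> \<theta>$j \<and> \<theta>$j \<le> 1}"

definition bdZn :: "(real^'k) set" where
  "bdZn = (top_of_set MR) frontier_of Zn"

end

theory Submission
  imports Defs
begin

text \<open>Write \<open>I(x, 0) = \<lambda>(x) x\<close> on the zero section. Holomorphicity of \<open>I\<close> there turns the
  vertical derivative into \<open>i\<close> times the horizontal one, so the \<open>j\<close>-th coordinate of the lift of
  \<open>L\<^sub>\<epsilon>(x) = I(x, \<epsilon> \<nabla>f(x))\<close>, divided by \<open>\<lambda>(x)\<close>, is \<open>x\<^sub>j + i \<epsilon> \<partial>\<^sub>jf(x) + \<epsilon> c(x) x\<^sub>j + o(\<epsilon>)\<close>.
  It is therefore close to the positive real axis where \<open>x\<^sub>j > 0\<close>, close to the negative real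
  axis where \<open>x\<^sub>j < 0\<close>, and in the upper half plane where \<open>x\<^sub>j \<approx> 0\<close>, because there
  \<open>\<partial>\<^sub>jf \<ge> 1/(2(n+2))\<close>. Hence, modulo \<open>2\<pi>\<close> and the common shift \<open>Arg \<lambda>(x)\<close>, the argument
  vector of \<open>L\<^sub>\<epsilon>(x)\<close> is \<open>O(\<epsilon>)\<close>-close to \<open>\<pi> \<Theta>(x)\<close>, where \<open>\<Theta>\<^sub>j \<in> [0, 1]\<close> is \<open>\<bar>Arg\<bar>/\<pi>\<close> of
  that coordinate; some \<open>\<Theta>\<^sub>j\<close> is near 0 and some near 1. As \<open>Z\<^sub>n\<close> is the set of \<open>y \<in> M\<^sub>\<real>\<close>
  with \<open>max\<^sub>j y\<^sub>j - min\<^sub>j y\<^sub>j \<le> 1\<close>, rescaling \<open>\<Theta>(x)\<close> to span 1 gives \<open>p\<^sub>\<epsilon>(x) \<in> \<partial>Z\<^sub>n\<close> at the same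
  cost. Finally \<open>p\<^sub>\<epsilon>(x) \<bullet> x \<le> 0\<close>, since \<open>\<Theta>\<^sub>j\<close> is large exactly where \<open>x\<^sub>j\<close> is negative, so
  \<open>p\<^sub>\<epsilon>\<close> is homotopic in \<open>M\<^sub>\<real> - {0}\<close> to the homeomorphism \<open>x \<mapsto> -x / span(-x)\<close> from \<open>S\<^sup>n\<close>
  onto \<open>\<partial>Z\<^sub>n\<close>, hence a homotopy equivalence.\<close>

definition coord_max :: "real^'k \<Rightarrow> real" where
  "coord_max y = Max (range (\<lambda>j. y$j))"

definition coord_min :: "real^'k \<Rightarrow> real" where
  "coord_min y = Min (range (\<lambda>j. y$j))"

definition coord_span :: "real^'k \<Rightarrow> real" where
  "coord_span y = coord_max y - coord_min y"

lemma coord_max_ge: "y$j \<le> coord_max y"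
  unfolding coord_max_def by (rule Max_ge) auto

lemma coord_min_le: "coord_min y \<le> y$j"
  unfolding coord_min_def by (rule Min_le) auto

lemma coord_max_attained: obtains j where "coord_max y = y$j"
proof -
  have "Max (range (\<lambda>j. y$j)) \<in> range (\<lambda>j. y$j)" by (rule Max_in) auto
  then show ?thesis using that unfolding coord_max_def by blast
qed

lemma coord_min_attained: obtains j where "coord_min y = y$j"
proof -
  have "Min (range (\<lambda>j. y$j)) \<in> range (\<lambda>j. y$j)" by (rule Min_in) auto
  then show ?thesis using that unfolding coord_min_def by blast
qed

lemma coord_diff_le_span: "y$i - y$j \<le> coord_span y"
  using coord_max_ge[of y i] coord_min_le[of y j] unfolding coord_span_def by linarith

lemma coord_span_le_iff: "coord_span y \<le> c \<longleftrightarrow> (\<forall>i j. y$i - y$j \<le> c)"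
  by (metis coord_diff_le_span coord_max_attained coord_min_attained coord_span_def order_trans)

lemma coord_max_eqI: "(\<And>j. y$j \<le> M) \<Longrightarrow> y$i = M \<Longrightarrow> coord_max y = M"
  by (metis coord_max_attained coord_max_ge order_antisym)

lemma coord_min_eqI: "(\<And>j. M \<le> y$j) \<Longrightarrow> y$i = M \<Longrightarrow> coord_min y = M"
  by (metis coord_min_attained coord_min_le order_antisym)

lemma coord_span_add_const: "coord_span (y + c *\<^sub>R (ones::real^'k)) = coord_span y"
proof -
  obtain i i' where i: "coord_max y = y$i" and i': "coord_min y = y$i'"
    by (meson coord_max_attained coord_min_attained)
  have "coord_max (y + c *\<^sub>R ones) = coord_max y + c"
    using i by (intro coord_max_eqI[of _ _ i]) (auto simp: ones_def, metis coord_max_ge)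
  moreover have "coord_min (y + c *\<^sub>R ones) = coord_min y + c"
    using i' by (intro coord_min_eqI[of _ _ i']) (auto simp: ones_def, metis coord_min_le)
  ultimately show ?thesis by (simp add: coord_span_def)
qed

lemma coord_span_scaleR: "c \<ge> 0 \<Longrightarrow> coord_span (c *\<^sub>R y) = c * coord_span y"
proof -
  assume c: "c \<ge> 0"
  obtain i i' where i: "coord_max y = y$i" and i': "coord_min y = y$i'"
    by (meson coord_max_attained coord_min_attained)
  have "coord_max (c *\<^sub>R y) = c * coord_max y"
    using i c by (intro coord_max_eqI[of _ _ i]) (auto, metis coord_max_ge mult_left_mono)
  moreover have "coord_min (c *\<^sub>R y) = c * coord_min y"
    using i' c by (intro coord_min_eqI[of _ _ i']) (auto, metis coord_min_le mult_left_mono)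
  ultimately show ?thesis by (simp add: coord_span_def right_diff_distrib)
qed

lemma continuous_on_coord_span: "continuous_on S (coord_span :: real^'k \<Rightarrow> real)"
proof -
  have Max_Min: "continuous_on S (\<lambda>y::real^'k. Max ((\<lambda>j. y$j) ` A))
      \<and> continuous_on S (\<lambda>y::real^'k. Min ((\<lambda>j. y$j) ` A))" if "finite A" "A \<noteq> {}" for A
    using that
  proof (induction A rule: finite_ne_induct)
    case (insert j A)
    then show ?case
      by (simp add: continuous_on_max continuous_on_min continuous_on_component)
  qed (simp add: continuous_on_component)
  show ?thesis
    unfolding coord_span_def[abs_def] coord_max_def coord_min_def
    using Max_Min[of UNIV] by (simp add: continuous_on_diff)
qed

lemma inner_ones: "y \<bullet> (ones::real^'k) = (\<Sum>j\<in>UNIV. y$j)"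
  by (simp add: inner_vec_def ones_def)

lemma inner_ones_ones: "(ones::real^'k) \<bullet> ones = real CARD('k)"
  by (simp add: inner_vec_def ones_def)

lemma Pm_eq: "Pm \<theta> = \<theta> - ((\<Sum>j\<in>UNIV. \<theta>$j) / real CARD('k)) *\<^sub>R (ones::real^'k)"
  by (simp only: Pm_def inner_ones_ones) (simp only: inner_ones)

lemma subspace_MR: "subspace MR"
  unfolding subspace_def MR_def by (simp add: sum.distrib sum_distrib_left[symmetric])

lemma closed_MR: "closed MR"
  unfolding MR_def by (intro closed_Collect_eq continuous_intros)

lemma MR_iff_orthogonal_ones: "y \<in> MR \<longleftrightarrow> y \<bullet> (ones::real^'k) = 0"
  by (simp add: MR_def inner_ones)

lemma Pm_in_MR: "Pm \<theta> \<in> MR"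
  by (simp add: MR_iff_orthogonal_ones Pm_def inner_diff_left inner_ones_ones)

lemma Pm_MR: "y \<in> MR \<Longrightarrow> Pm y = y"
  by (simp add: MR_iff_orthogonal_ones Pm_def)

lemma Pm_add_const: "Pm (y + c *\<^sub>R (ones::real^'k)) = Pm y"
proof -
  let ?u = "ones :: real^'k"
  have "((y + c *\<^sub>R ?u) \<bullet> ?u) / (?u \<bullet> ?u) = (y \<bullet> ?u) / (?u \<bullet> ?u) + c"
    by (simp add: inner_add_left inner_ones_ones field_simps)
  then show ?thesis by (simp add: Pm_def scaleR_add_left)
qed

lemma coord_span_Pm: "coord_span (Pm \<theta>) = coord_span \<theta>"
  using coord_span_add_const[of \<theta> "- ((\<theta> \<bullet> ones) / (ones \<bullet> ones))"] by (simp add: Pm_def)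

lemma inner_Pm_MR: "x \<in> MR \<Longrightarrow> Pm \<theta> \<bullet> x = \<theta> \<bullet> x"
  by (simp add: Pm_def MR_iff_orthogonal_ones inner_diff_left inner_commute[of ones x])

lemma axis_diff_in_MR: "axis i 1 - axis j 1 \<in> (MR::(real^'k) set)"
  by (simp add: MR_def axis_def sum_subtractf)

lemma coord_span_pos:
  fixes y :: "real^'k"
  assumes "y \<in> MR" "y \<noteq> 0"
  shows "coord_span y > 0"
proof (rule ccontr)
  assume "\<not> coord_span y > 0"
  then have "\<And>i j. y$i \<le> y$j"
    by (metis coord_diff_le_span diff_le_0_iff_le order_trans not_less)
  then obtain c where const: "\<And>j. y$j = c" by (meson order_antisym)
  then have "c = 0" using assms(1) by (simp add: MR_def)
  then have "y = 0" using const by (simp add: vec_eq_iff)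
  with assms show False by simp
qed

lemma Zn_eq: "Zn = {y \<in> MR. coord_span y \<le> 1}"
proof (intro set_eqI iffI)
  fix y :: "real^'k"
  assume "y \<in> Zn"
  then obtain \<theta> where \<theta>: "\<And>j. 0 \<le> \<theta>$j \<and> \<theta>$j \<le> 1" and y: "y = Pm \<theta>" unfolding Zn_def by auto
  have "coord_span \<theta> \<le> 1"
    unfolding coord_span_le_iff using \<theta> by (smt (verit))
  then show "y \<in> {y \<in> MR. coord_span y \<le> 1}" using y by (simp add: Pm_in_MR coord_span_Pm)
next
  fix y :: "real^'k"
  assume y: "y \<in> {y \<in> MR. coord_span y \<le> 1}"
  define \<theta> where "\<theta> = y + (- coord_min y) *\<^sub>R (ones::real^'k)"
  have "0 \<le> \<theta>$j \<and> \<theta>$j \<le> 1" for j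
    using y coord_min_le[of y j] coord_max_ge[of y j] unfolding \<theta>_def coord_span_def
    by (simp add: ones_def)
  moreover have "Pm \<theta> = y" unfolding \<theta>_def Pm_add_const using y Pm_MR by blast
  ultimately show "y \<in> Zn" unfolding Zn_def by blast
qed

lemma closed_Zn: "closed Zn"
proof -
  have "closed {y::real^'k. coord_span y \<le> 1}"
    by (rule closed_Collect_le[OF continuous_on_coord_span continuous_on_const])
  then show ?thesis using closed_MR by (metis Zn_eq Collect_conj_eq Collect_mem_eq closed_Int)
qed

lemma coord_span_increase_nearby:
  fixes y :: "real^'k"
  assumes "coord_span y > 0" "r > 0"
  obtains z where "z - y \<in> MR" "norm (z - y) < r" "coord_span z > coord_span y"
proof -
  obtain i j where i: "coord_max y = y$i" and j: "coord_min y = y$j"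
    by (meson coord_max_attained coord_min_attained)
  have ij: "i \<noteq> j" using i j assms(1) unfolding coord_span_def by auto
  define d :: "real^'k" where "d = (r/4) *\<^sub>R (axis i 1 - axis j 1)"
  have "d \<in> MR" unfolding d_def by (rule subspace_mul[OF subspace_MR axis_diff_in_MR])
  moreover have "norm d < r"
  proof -
    have "norm d \<le> (r/4) * 2" unfolding d_def using assms(2) by (simp add: norm_triangle_le_diff)
    then show ?thesis using assms(2) by linarith
  qed
  moreover have "(y + d)$i - (y + d)$j = coord_span y + r/2"
    using i j ij unfolding d_def coord_span_def by (simp add: axis_def)
  then have "coord_span (y + d) > coord_span y"
    using coord_diff_le_span[of "y + d" i j] assms(2) by linarith
  ultimately show ?thesis using that[of "y + d"] by simp
qed

lemma bdZn_eq: "(bdZn::(real^'k) set) = {y \<in> MR. coord_span y = 1}"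
proof -
  have ZMR: "Zn \<subseteq> (MR::(real^'k) set)" by (auto simp: Zn_eq)
  have closure: "top_of_set MR closure_of Zn = (Zn::(real^'k) set)"
    using closed_Zn ZMR by (metis closure_of_eq closedin_closed_Int inf.absorb_iff2)
  have interior: "top_of_set MR interior_of Zn = {y::real^'k. y \<in> MR \<and> coord_span y < 1}"
  proof (intro set_eqI iffI)
    fix y :: "real^'k" assume "y \<in> top_of_set MR interior_of Zn"
    then obtain W where W: "open W" "y \<in> W \<inter> MR" "W \<inter> MR \<subseteq> Zn"
      unfolding interior_of_def openin_open by blast
    then obtain r where r: "r > 0" "ball y r \<subseteq> W" by (meson IntD1 openE)
    have yZ: "y \<in> Zn" "y \<in> MR" using W by auto
    have "\<not> coord_span y = 1"
    proof
      assume s: "coord_span y = 1"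
      then obtain z where z: "z - y \<in> MR" "norm (z - y) < r" "coord_span z > 1"
        by (metis coord_span_increase_nearby r(1) zero_less_one)
      have "z \<in> MR" using subspace_add[OF subspace_MR z(1) yZ(2)] by simp
      moreover have "z \<in> W" using r z(2) by (auto simp: dist_norm norm_minus_commute)
      ultimately show False using W(3) z(3) by (auto simp: Zn_eq)
    qed
    then show "y \<in> {y \<in> MR. coord_span y < 1}" using yZ by (auto simp: Zn_eq)
  next
    fix y :: "real^'k" assume y: "y \<in> {y \<in> MR. coord_span y < 1}"
    have "open {z::real^'k. coord_span z < 1}"
      by (rule open_Collect_less[OF continuous_on_coord_span continuous_on_const])
    then have "openin (top_of_set MR) ((MR::(real^'k) set) \<inter> {z. coord_span z < 1})"
      by (rule openin_open_Int)
    moreover have "(MR::(real^'k) set) \<inter> {z. coord_span z < 1} \<subseteq> Zn" by (auto simp: Zn_eq)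
    ultimately show "y \<in> top_of_set MR interior_of Zn"
      using y unfolding interior_of_def by blast
  qed
  show ?thesis unfolding bdZn_def frontier_of_def closure interior by (auto simp: Zn_eq)
qed

lemma sphereS_eq: "sphereS = MR \<inter> sphere 0 1"
  by (auto simp: sphereS_def MR_def norm_eq_1)

lemma homotopy_equivalence_map_if_homotopic_homeomorphic:
  assumes pf: "homotopic_with (\<lambda>x. True) X Y p f" and fg: "homeomorphic_maps X Y f g"
  shows "homotopy_equivalence_map X Y p"
proof -
  have g: "continuous_map Y X g" and gf: "\<And>x. x \<in> topspace X \<Longrightarrow> g (f x) = x"
    and fg': "\<And>y. y \<in> topspace Y \<Longrightarrow> f (g y) = y"
    using fg by (auto simp: homeomorphic_maps_def)
  have "homotopic_with (\<lambda>x. True) X X (g \<circ> p) (g \<circ> f)"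
    by (rule homotopic_with_compose_continuous_map_left[OF pf g]) simp
  moreover have "homotopic_with (\<lambda>x. True) X X (g \<circ> f) id" by (intro homotopic_with_id2 gf)
  ultimately have gp: "homotopic_with (\<lambda>x. True) X X (g \<circ> p) id" by (rule homotopic_with_trans)
  have "homotopic_with (\<lambda>x. True) Y Y (p \<circ> g) (f \<circ> g)"
    by (rule homotopic_with_compose_continuous_map_right[OF pf g]) simp
  moreover have "homotopic_with (\<lambda>x. True) Y Y (f \<circ> g) id" by (intro homotopic_with_id2 fg')
  ultimately have pg: "homotopic_with (\<lambda>x. True) Y Y (p \<circ> g) id" by (rule homotopic_with_trans)
  show ?thesis
    unfolding homotopy_equivalence_map_def using homotopic_with_imp_continuous_maps[OF pf] g gp pg
    by blast
qed

definition radial_bdZn :: "real^'k \<Rightarrow> real^'k" where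
  "radial_bdZn y = (1 / coord_span y) *\<^sub>R y"

lemma radial_bdZn_in_bdZn: "y \<in> MR \<Longrightarrow> y \<noteq> 0 \<Longrightarrow> radial_bdZn y \<in> bdZn"
  using coord_span_pos[of y]
  by (simp add: bdZn_eq radial_bdZn_def coord_span_scaleR subspace_mul[OF subspace_MR])

lemma radial_bdZn_bdZn: "y \<in> bdZn \<Longrightarrow> radial_bdZn y = y"
  by (simp add: bdZn_eq radial_bdZn_def)

lemma zero_notin_bdZn: "(0::real^'k) \<notin> bdZn"
  using coord_span_scaleR[of 0 "0::real^'k"] by (simp add: bdZn_eq)

lemma continuous_on_radial_bdZn: "continuous_on (MR - {0}) radial_bdZn"
  unfolding radial_bdZn_def
  using coord_span_pos by (intro continuous_intros continuous_on_coord_span) force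

lemma homeomorphic_maps_sphereS_bdZn:
  "homeomorphic_maps (top_of_set sphereS) (top_of_set bdZn) (\<lambda>x. radial_bdZn (- x)) (\<lambda>y. - sgn y)"
proof -
  have to_bd: "radial_bdZn (- x) \<in> bdZn" if "x \<in> sphereS" for x :: "real^'k"
    using that by (intro radial_bdZn_in_bdZn) (auto simp: sphereS_eq subspace_neg[OF subspace_MR])
  have to_S: "- sgn y \<in> sphereS" if "y \<in> bdZn" for y :: "real^'k"
  proof -
    have "y \<noteq> 0" "y \<in> MR" using that zero_notin_bdZn by (auto simp: bdZn_eq)
    moreover have "- sgn y \<in> MR"
      using \<open>y \<in> MR\<close> by (simp add: sgn_div_norm subspace_neg[OF subspace_MR] subspace_mul[OF subspace_MR])
    ultimately show ?thesis by (simp add: sphereS_eq norm_sgn)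
  qed
  have "continuous_on sphereS (\<lambda>x::real^'k. radial_bdZn (- x))"
    by (rule continuous_on_compose2[OF continuous_on_radial_bdZn continuous_on_minus[OF continuous_on_id]])
       (auto simp: sphereS_eq subspace_neg[OF subspace_MR])
  moreover have "continuous_on bdZn (sgn :: real^'k \<Rightarrow> real^'k)"
    using zero_notin_bdZn by (intro continuous_intros) auto
  moreover have "- sgn (radial_bdZn (- x)) = x" if "x \<in> sphereS" for x :: "real^'k"
  proof -
    have "coord_span (- x) > 0"
      using that by (intro coord_span_pos) (auto simp: sphereS_eq subspace_neg[OF subspace_MR])
    then show ?thesis using that by (simp add: radial_bdZn_def sphereS_eq sgn_minus sgn_scaleR sgn_div_norm)
  qed
  moreover have "radial_bdZn (- (- sgn y)) = y" if "y \<in> bdZn" for y :: "real^'k"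
  proof -
    have "y \<noteq> 0" using that zero_notin_bdZn by blast
    then have "sgn y = (1 / norm y) *\<^sub>R y" by (simp add: sgn_div_norm divide_inverse_commute)
    then show ?thesis
      using that by (simp add: radial_bdZn_def bdZn_eq coord_span_scaleR \<open>y \<noteq> 0\<close>)
  qed
  ultimately show ?thesis
    using to_bd to_S by (auto simp: homeomorphic_maps_def continuous_map_in_subtopology)
qed

text \<open>The straight segment from \<open>p x\<close> to \<open>-x / coord_span (-x)\<close> avoids the origin because both
  endpoints have non-positive and negative inner product with \<open>x\<close>, respectively.\<close>
lemma homotopic_radial_antipode:
  assumes pc: "continuous_on sphereS p" and pS: "p ` sphereS \<subseteq> bdZn"
    and neg: "\<And>x. x \<in> sphereS \<Longrightarrow> p x \<bullet> x \<le> (0::real)"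
  shows "homotopic_with_canon (\<lambda>x. True) (sphereS::(real^'k) set) bdZn p (\<lambda>x. radial_bdZn (- x))"
proof -
  have mu: "continuous_on sphereS (\<lambda>x::real^'k. radial_bdZn (- x))"
    and mu_bd: "\<And>x::real^'k. x \<in> sphereS \<Longrightarrow> radial_bdZn (- x) \<in> bdZn"
    using homeomorphic_maps_sphereS_bdZn
    by (auto simp: homeomorphic_maps_def continuous_map_in_subtopology)
  have "homotopic_with_canon (\<lambda>x. True) sphereS (MR - {0}) p (\<lambda>x. radial_bdZn (- x))"
  proof (rule homotopic_with_linear[OF pc mu])
    fix x :: "real^'k" assume x: "x \<in> sphereS"
    have pB: "p x \<in> bdZn" using pS x by auto
    have "coord_span (- x) > 0"
      using x by (intro coord_span_pos) (auto simp: sphereS_eq subspace_neg[OF subspace_MR])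
    then have "radial_bdZn (- x) \<bullet> x < 0"
      using x by (simp add: radial_bdZn_def sphereS_def)
    moreover have "radial_bdZn (- x) \<in> MR" using mu_bd[OF x] by (simp add: bdZn_eq)
    moreover have "p x \<noteq> 0" "p x \<in> MR" using pB zero_notin_bdZn by (auto simp: bdZn_eq)
    ultimately show "closed_segment (p x) (radial_bdZn (- x)) \<subseteq> MR - {0}"
    proof (intro subsetI)
      fix z assume "z \<in> closed_segment (p x) (radial_bdZn (- x))"
      then obtain u where u: "0 \<le> u" "u \<le> 1" "z = (1 - u) *\<^sub>R p x + u *\<^sub>R radial_bdZn (- x)"
        unfolding closed_segment_def by blast
      have "z \<noteq> 0"
      proof (cases "u = 0")
        case False
        have "z \<bullet> x = (1 - u) * (p x \<bullet> x) + u * (radial_bdZn (- x) \<bullet> x)"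
          using u(3) by (simp add: inner_add_left)
        also have "\<dots> < 0"
          using u False neg[OF x] \<open>radial_bdZn (- x) \<bullet> x < 0\<close>
          by (intro add_nonpos_neg mult_nonneg_nonpos mult_pos_neg) auto
        finally show ?thesis by auto
      qed (use u \<open>p x \<noteq> 0\<close> in simp)
      moreover have "z \<in> MR"
        using u \<open>p x \<in> MR\<close> \<open>radial_bdZn (- x) \<in> MR\<close>
        by (simp add: subspace_add[OF subspace_MR] subspace_mul[OF subspace_MR])
      ultimately show "z \<in> MR - {0}" by simp
    qed
  qed
  then have "homotopic_with_canon (\<lambda>x. True) sphereS bdZn (radial_bdZn \<circ> p) (radial_bdZn \<circ> (\<lambda>x. radial_bdZn (- x)))"
    by (rule homotopic_with_compose_continuous_left[OF _ continuous_on_radial_bdZn])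
       (auto simp: radial_bdZn_in_bdZn)
  then show ?thesis
    by (rule homotopic_with_eq) (use pS mu_bd in \<open>auto simp: radial_bdZn_bdZn image_subset_iff\<close>)
qed

lemma homotopy_equivalence_sphereS_bdZn:
  assumes "continuous_on sphereS p" "p ` sphereS \<subseteq> bdZn"
    and "\<And>x. x \<in> sphereS \<Longrightarrow> p x \<bullet> x \<le> (0::real)"
  shows "homotopy_equivalence_map (top_of_set (sphereS::(real^'k) set)) (top_of_set bdZn) p"
  using homotopy_equivalence_map_if_homotopic_homeomorphic[OF
      homotopic_radial_antipode[OF assms] homeomorphic_maps_sphereS_bdZn] .

lemma smooth_on_C1:
  assumes "smooth_on U f"
  shows "\<And>x. x \<in> U \<Longrightarrow> f differentiable (at x)"
    and "\<And>v. continuous_on U (\<lambda>x. frechet_derivative f (at x) v)"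
    and "continuous_on U f" "open U"
proof -
  have "Ck_on (Suc 0) U f" "Ck_on 0 U f" "open U" using assms unfolding smooth_on_def by blast+
  then show "\<And>x. x \<in> U \<Longrightarrow> f differentiable (at x)"
    "\<And>v. continuous_on U (\<lambda>x. frechet_derivative f (at x) v)" "continuous_on U f" "open U"
    by auto
qed

lemma deriv_eq_frechet_derivative:
  fixes g :: "real \<Rightarrow> real"
  assumes "g differentiable (at x)"
  shows "deriv g x = frechet_derivative g (at x) 1"
proof -
  have d: "(g has_derivative frechet_derivative g (at x)) (at x)"
    using assms frechet_derivative_works by blast
  have "frechet_derivative g (at x) = (\<lambda>h. frechet_derivative g (at x) 1 * h)"
  proof
    fix h :: real
    show "frechet_derivative g (at x) h = frechet_derivative g (at x) 1 * h"
      using linear_scale[OF has_derivative_linear[OF d], of h 1] by simp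
  qed
  then have "(g has_field_derivative frechet_derivative g (at x) 1) (at x)"
    using d unfolding has_field_derivative_def by metis
  then show ?thesis by (rule DERIV_imp_deriv)
qed

lemma admissible_g_deriv:
  assumes ag: "admissible_g \<delta> g" and dpos: "\<delta> > 0"
  shows "continuous_on UNIV (deriv g)" and "\<And>x. \<bar>x\<bar> \<le> \<delta> \<Longrightarrow> deriv g x = 1"
    and "\<And>x. deriv g x \<le> 1" and "\<And>x. deriv g x > 0" and "\<And>x. \<bar>x\<bar> > 2 * \<delta> \<Longrightarrow> deriv g x < \<delta>"
proof -
  have sm: "smooth_on UNIV g" and id: "\<forall>x. \<bar>x\<bar> < \<delta> \<longrightarrow> g x = x"
    and mono: "\<forall>x y. \<delta> < \<bar>x\<bar> \<and> \<bar>x\<bar> < \<bar>y\<bar> \<longrightarrow> deriv g y < deriv g x"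
    and pos: "\<forall>x. deriv g x > 0" and small: "\<forall>x. \<bar>x\<bar> > 2 * \<delta> \<longrightarrow> deriv g x < \<delta>"
    using ag by (simp_all add: admissible_g_def)
  have "deriv g = (\<lambda>x. frechet_derivative g (at x) 1)"
    using smooth_on_C1(1)[OF sm] deriv_eq_frechet_derivative by blast
  then show cd: "continuous_on UNIV (deriv g)" using smooth_on_C1(2)[OF sm] by metis
  have inner: "deriv g x = 1" if "\<bar>x\<bar> < \<delta>" for x
  proof -
    have "(g has_field_derivative 1) (at x)"
      by (rule has_field_derivative_transform_within_open[OF DERIV_ident, of "{-\<delta><..<\<delta>}"])
         (use that id in auto)
    then show ?thesis by (rule DERIV_imp_deriv)
  qed
  show closed_inner: "deriv g x = 1" if "\<bar>x\<bar> \<le> \<delta>" for x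
  proof (rule continuous_constant_on_closure[of "{-\<delta><..<\<delta>}" "deriv g"])
    show "continuous_on (closure {-\<delta><..<\<delta>}) (deriv g)" using cd continuous_on_subset by blast
  qed (use inner that dpos in auto)
  show "\<And>x. deriv g x > 0" "\<And>x. \<bar>x\<bar> > 2 * \<delta> \<Longrightarrow> deriv g x < \<delta>" using pos small by blast+
  show "deriv g y \<le> 1" for y
  proof (cases "\<bar>y\<bar> \<le> \<delta>")
    case False
    text \<open>\<open>deriv g\<close> decreases in \<open>\<bar>x\<bar>\<close> beyond \<open>\<delta>\<close>; let \<open>x \<rightarrow> \<delta>\<^sup>+\<close>.\<close>
    have "isCont (deriv g) \<delta>" using cd by (simp add: continuous_on_eq_continuous_at)
    then have "(deriv g \<longlongrightarrow> deriv g \<delta>) (at_right \<delta>)"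
      unfolding isCont_def by (rule tendsto_mono[OF at_le, rotated]) simp
    moreover have "\<forall>\<^sub>F x in at_right \<delta>. deriv g y \<le> deriv g x"
    proof -
      have "\<forall>\<^sub>F x in at_right \<delta>. x \<in> {\<delta><..<\<bar>y\<bar>}"
        using False by (intro eventually_at_right_real) simp
      then show ?thesis
      proof (rule eventually_mono)
        fix x assume "x \<in> {\<delta><..<\<bar>y\<bar>}"
        then have "\<delta> < \<bar>x\<bar>" "\<bar>x\<bar> < \<bar>y\<bar>" using dpos by auto
        then show "deriv g y \<le> deriv g x" by (simp add: less_imp_le mono)
      qed
    qed
    ultimately have "deriv g y \<le> deriv g \<delta>" by (rule tendsto_lowerbound) simp
    then show ?thesis using closed_inner[of \<delta>] dpos by simp
  qed (use closed_inner in simp)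
qed

lemma compact_sphereS: "compact sphereS"
  unfolding sphereS_eq by (rule closed_Int_compact[OF closed_MR compact_sphere])

lemma sphereS_nonempty:
  assumes "CARD('k::finite) \<ge> 2" shows "(sphereS::(real^'k) set) \<noteq> {}"
proof -
  fix a :: 'k
  have "card (UNIV - {a}) > 0" using assms by (simp add: card_Diff_singleton)
  then obtain b where ab: "a \<noteq> b" by (metis card_gt_0_iff Diff_iff ex_in_conv singletonI)
  define x :: "real^'k" where "x = (1 / sqrt 2) *\<^sub>R (axis a 1 - axis b 1)"
  have "x \<in> MR" unfolding x_def by (rule subspace_mul[OF subspace_MR axis_diff_in_MR])
  moreover have "x \<bullet> x = 1"
    using ab by (simp add: x_def inner_diff_left inner_diff_right inner_axis_axis)
  ultimately have "x \<in> sphereS" unfolding sphereS_def MR_def by simp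
  then show ?thesis by blast
qed

lemma sphereS_abs_component_le: "x \<in> sphereS \<Longrightarrow> \<bar>x$j\<bar> \<le> 1"
  using component_le_norm_cart[of x j] by (simp add: sphereS_eq)

text \<open>Since \<open>\<Sum>j x\<^sub>j = 0\<close> and \<open>\<Sum>j \<bar>x\<^sub>j\<bar> \<ge> \<Sum>j x\<^sub>j\<^sup>2 = 1\<close>, the positive parts of the
  coordinates sum to at least \<open>1/2\<close>.\<close>
lemma sphereS_exists_component_ge:
  assumes x: "x \<in> (sphereS::(real^'k) set)"
  obtains j where "x$j \<ge> 1 / (2 * real CARD('k))"
proof (rule ccontr)
  assume "\<not> thesis"
  then have lt: "\<And>j. x$j < 1 / (2 * real CARD('k))" using that by (metis not_le)
  have "1 = (\<Sum>j\<in>UNIV. x$j * x$j)" using x by (simp add: sphereS_def inner_vec_def)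
  also have "\<dots> \<le> (\<Sum>j\<in>UNIV. \<bar>x$j\<bar>)"
  proof (rule sum_mono)
    fix j
    have "\<bar>x$j\<bar> * \<bar>x$j\<bar> \<le> \<bar>x$j\<bar>"
      using sphereS_abs_component_le[OF x] by (metis mult_left_le abs_ge_zero)
    then show "x$j * x$j \<le> \<bar>x$j\<bar>" by (simp add: abs_mult_self_eq)
  qed
  also have "\<dots> = 2 * (\<Sum>j\<in>UNIV. max (x$j) 0)"
  proof -
    have "(\<Sum>j\<in>UNIV. \<bar>x$j\<bar>) = (\<Sum>j\<in>UNIV. 2 * max (x$j) 0 - x$j)"
      by (intro sum.cong) auto
    then show ?thesis using x by (simp add: sphereS_def sum_subtractf sum_distrib_left)
  qed
  also have "\<dots> < 2 * (\<Sum>j\<in>(UNIV::'k set). 1 / (2 * real CARD('k)))"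
    using lt by (intro mult_strict_left_mono sum_strict_mono) auto
  also have "\<dots> = 1" by simp
  finally show False by simp
qed

lemma sphereS_exists_component_le:
  assumes x: "x \<in> (sphereS::(real^'k) set)"
  obtains j where "x$j \<le> - (1 / (2 * real CARD('k)))"
proof -
  have "- x \<in> sphereS" using x by (simp add: sphereS_eq subspace_neg[OF subspace_MR])
  then obtain j where "(- x)$j \<ge> 1 / (2 * real CARD('k))" by (rule sphereS_exists_component_ge)
  then have "x$j \<le> - (1 / (2 * real CARD('k)))" by simp
  then show ?thesis by (rule that)
qed

lemma grad_f_eq:
  "grad_f g x = (\<chi> j. deriv g (x$j)) - ((\<chi> j. deriv g (x$j)) \<bullet> x) *\<^sub>R x
     - ((\<Sum>j\<in>UNIV. deriv g (x$j)) / real CARD('k)) *\<^sub>R (ones::real^'k)"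
  by (simp only: grad_f_def Let_def inner_ones_ones) (simp add: inner_ones)

lemma continuous_on_grad_f:
  assumes "continuous_on UNIV (deriv g)"
  shows "continuous_on UNIV (grad_f g :: real^'k \<Rightarrow> real^'k)"
proof -
  have c: "continuous_on UNIV (\<lambda>x::real^'k. deriv g (x$j))" for j
    by (rule continuous_on_compose2[OF assms continuous_on_component[OF continuous_on_id]]) auto
  then have "continuous_on UNIV (\<lambda>x::real^'k. \<chi> j. deriv g (x$j))"
    by (rule continuous_on_vec_lambda)
  then show ?thesis unfolding grad_f_eq[abs_def]
    by (intro continuous_on_diff continuous_on_scaleR continuous_on_inner continuous_on_divide
        continuous_on_sum continuous_on_const continuous_on_id c) auto
qed

lemma inner_grad_f_sphereS: "(x::real^'k) \<in> sphereS \<Longrightarrow> grad_f g x \<bullet> x = 0"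
  by (simp add: grad_f_def Let_def inner_diff_left sphereS_def inner_commute[of ones x] inner_ones)

lemma grad_f_in_MR: "(x::real^'k) \<in> MR \<Longrightarrow> grad_f g x \<in> MR"
  by (simp add: MR_iff_orthogonal_ones grad_f_def Let_def inner_diff_left inner_ones_ones)

text \<open>Near a vanishing coordinate \<open>x\<^sub>j\<close> the gradient of \<open>f\<close> has \<open>j\<close>-th component of order
  \<open>1/(n+2)\<close>: there \<open>g' = 1\<close>, while the average of \<open>g'\<close> is pulled below 1 by a coordinate
  of size \<open>\<ge> 1/(2(n+2))\<close>, where \<open>g' < \<delta>\<close>.\<close>
lemma grad_f_component_lower_bound:
  assumes ag: "admissible_g \<delta> g" and d0: "0 < \<delta>" and d1: "\<delta> < 1 / (4 * real CARD('k))"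
    and x: "x \<in> (sphereS::(real^'k) set)" and xj: "\<bar>x$j\<bar> < \<delta>"
  shows "grad_f g x $ j \<ge> 3 / (4 * real CARD('k)) - real CARD('k) * \<bar>x$j\<bar>"
proof -
  let ?K = "real CARD('k)" and ?w = "(\<chi> i. deriv g (x$i)) :: real^'k"
  note gd = admissible_g_deriv[OF ag d0]
  have "\<bar>?w \<bullet> x\<bar> \<le> (\<Sum>i\<in>UNIV. \<bar>deriv g (x$i) * x$i\<bar>)"
    unfolding inner_vec_def by (simp add: sum_abs)
  also have "\<dots> \<le> (\<Sum>i\<in>(UNIV::'k set). 1)"
  proof (rule sum_mono)
    fix i
    have "\<bar>deriv g (x$i)\<bar> \<le> 1" using gd(3,4)[of "x$i"] by simp
    then show "\<bar>deriv g (x$i) * x$i\<bar> \<le> 1"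
      using sphereS_abs_component_le[OF x, of i] by (simp add: abs_mult mult_le_one)
  qed
  finally have "\<bar>?w \<bullet> x\<bar> \<le> ?K" by simp
  then have "\<bar>?w \<bullet> x\<bar> * \<bar>x$j\<bar> \<le> ?K * \<bar>x$j\<bar>" by (simp add: mult_right_mono)
  then have f1: "(?w \<bullet> x) * x$j \<le> ?K * \<bar>x$j\<bar>"
    by (metis abs_ge_self abs_mult order_trans)
  obtain jp where jp: "x$jp \<ge> 1 / (2 * ?K)" using sphereS_exists_component_ge[OF x] by blast
  have "2 * \<delta> < 1 / (2 * ?K)" using d1 by (simp add: field_simps)
  then have wjp: "deriv g (x$jp) < \<delta>" using jp gd(5) by simp
  have "(\<Sum>i\<in>UNIV. deriv g (x$i)) = deriv g (x$jp) + (\<Sum>i\<in>UNIV - {jp}. deriv g (x$i))"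
    by (simp add: sum.remove)
  also have "\<dots> \<le> \<delta> + (\<Sum>i\<in>(UNIV::'k set) - {jp}. 1)"
    using wjp gd(3) by (intro add_mono sum_mono) (auto simp: less_imp_le)
  also have "\<dots> = \<delta> + (?K - 1)" by (simp add: card_Diff_singleton)
  finally have "(\<Sum>i\<in>UNIV. deriv g (x$i)) / ?K \<le> (\<delta> + (?K - 1)) / ?K"
    by (simp add: divide_right_mono)
  also have "\<dots> \<le> 1 - 3 / (4 * ?K)"
  proof -
    have "1 / (4 * ?K) \<le> 1 / 4" by (simp add: field_simps)
    then have "\<delta> \<le> 1 / 4" using d1 by linarith
    then show ?thesis by (simp add: field_simps)
  qed
  finally have f2: "(\<Sum>i\<in>UNIV. deriv g (x$i)) / ?K \<le> 1 - 3 / (4 * ?K)" .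
  have "grad_f g x $ j = 1 - (?w \<bullet> x) * x$j - (\<Sum>i\<in>UNIV. deriv g (x$i)) / ?K"
    using gd(2)[of "x$j"] xj by (simp add: grad_f_eq ones_def)
  then show ?thesis using f1 f2 by linarith
qed

lemma cmod_cos_Arg: "z \<noteq> 0 \<Longrightarrow> cmod z * cos (Arg z) = Re z"
  and cmod_sin_Arg: "z \<noteq> 0 \<Longrightarrow> cmod z * sin (Arg z) = Im z"
  using Arg_eq[of z] by (metis Re_exp exp_Ln norm_exp_eq_Re Arg_def, metis Im_exp exp_Ln norm_exp_eq_Re Arg_def)

lemma abs_Arg_eq_arccos: "z \<noteq> 0 \<Longrightarrow> \<bar>Arg z\<bar> = arccos (Re z / cmod z)"
  using cmod_cos_Arg[of z] mpi_less_Arg[of z] Arg_le_pi[of z]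
  by (metis abs_le_iff arccos_cos_eq_abs less_le nonzero_mult_div_cancel_left norm_eq_zero
      minus_less_iff)

lemma continuous_on_abs_Arg:
  assumes "continuous_on S w" "\<And>x. x \<in> S \<Longrightarrow> w x \<noteq> 0"
  shows "continuous_on S (\<lambda>x. \<bar>Arg (w x)\<bar>)"
proof -
  have "continuous_on S (\<lambda>x. arccos (Re (w x) / cmod (w x)))"
  proof (intro continuous_intros assms ballI)
    fix x assume "x \<in> S"
    then show "- 1 \<le> Re (w x) / cmod (w x) \<and> Re (w x) / cmod (w x) \<le> 1" "cmod (w x) \<noteq> 0"
      using abs_Re_le_cmod[of "w x"] assms(2) by (auto simp: abs_le_iff field_simps)
  qed
  then show ?thesis
    by (rule continuous_on_cong[THEN iffD1, rotated 2]) (use assms(2) abs_Arg_eq_arccos in auto)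
qed

lemma abs_Arg_le_Im_div_Re: assumes "Re w > 0" shows "\<bar>Arg w\<bar> \<le> \<bar>Im w\<bar> / Re w"
proof -
  have w0: "w \<noteq> 0" using assms by auto
  have b: "\<bar>Arg w\<bar> < pi/2" using assms Arg_Re_pos by auto
  have "Im w / Re w = (cmod w * sin (Arg w)) / (cmod w * cos (Arg w))"
    using cmod_cos_Arg[OF w0] cmod_sin_Arg[OF w0] by simp
  also have "\<dots> = tan (Arg w)" using w0 by (simp add: tan_def)
  finally have "tan (Arg w) = Im w / Re w" by simp
  then have "Arg w = arctan (Im w / Re w)" using b arctan_tan[of "Arg w"] by (auto simp: abs_less_iff)
  then show ?thesis using abs_arctan_le[of "Im w / Re w"] assms by simp
qed

lemma abs_Arg_ge_pi_minus: assumes "Re w < 0" shows "\<bar>Arg w\<bar> \<ge> pi - \<bar>Im w\<bar> / \<bar>Re w\<bar>"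
proof -
  have "\<bar>Arg (- w)\<bar> \<le> \<bar>Im w\<bar> / \<bar>Re w\<bar>" using abs_Arg_le_Im_div_Re[of "- w"] assms by simp
  moreover have "Arg w = Arg (- w) + pi \<or> Arg w = Arg (- w) - pi"
    using Arg_minus[of "- w"] assms by (cases "w = 0") (auto split: if_splits)
  ultimately show ?thesis by auto
qed

lemma Arg_close_abs_Arg_mod_2pi:
  assumes w0: "w \<noteq> 0" and r: "\<rho> \<ge> 0" and h: "Im w \<ge> 0 \<or> \<bar>Im w\<bar> \<le> \<rho> * \<bar>Re w\<bar>"
  shows "\<exists>k::int. \<bar>Arg w - \<bar>Arg w\<bar> - 2 * pi * k\<bar> \<le> 2 * \<rho>"
proof (cases "Im w \<ge> 0")
  case True
  then have "Arg w \<ge> 0" using Arg_less_0 by blast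
  then show ?thesis using r by (intro exI[of _ 0]) simp
next
  case False
  then have im: "\<bar>Im w\<bar> \<le> \<rho> * \<bar>Re w\<bar>" "Im w < 0" using h by auto
  have neg: "Arg w < 0" using im Arg_neg_iff by blast
  show ?thesis
  proof (cases "Re w > 0")
    case True
    have "\<bar>Arg w\<bar> \<le> \<bar>Im w\<bar> / Re w" by (rule abs_Arg_le_Im_div_Re[OF True])
    also have "\<dots> \<le> \<rho>" using im True by (simp only: pos_divide_le_eq[OF True])
    finally show ?thesis using neg by (intro exI[of _ 0]) simp
  next
    case False
    then have rn: "Re (- w) > 0" using im by (auto simp: less_le)
    have "\<bar>Arg (- w)\<bar> \<le> \<bar>Im (- w)\<bar> / Re (- w)" by (rule abs_Arg_le_Im_div_Re[OF rn])
    also have "\<dots> \<le> \<rho>" using im rn by (simp only: pos_divide_le_eq[OF rn]) (simp add: mult.commute)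
    finally have a: "\<bar>Arg (- w)\<bar> \<le> \<rho>" .
    have "Arg (- w) > 0" using im Arg_pos_iff[of "- w"] by simp
    then have "Arg w = Arg (- w) - pi" using Arg_minus[of "- w"] w0 by simp
    then show ?thesis using a neg by (intro exI[of _ "-1"]) simp
  qed
qed

lemma Arg_mult_mod_2pi:
  assumes "z \<noteq> 0" "w \<noteq> 0" shows "\<exists>k::int. Arg (z * w) = Arg z + Arg w + 2 * pi * k"
proof -
  have "Arg (z * w) = Arg z + Arg w + (if Arg z + Arg w \<in> {-pi<..pi} then 0
      else if Arg z + Arg w > pi then -2*pi else 2*pi)"
    using Arg_times'[OF assms] by simp
  then show ?thesis
    by (cases "Arg z + Arg w \<in> {-pi<..pi}"; cases "Arg z + Arg w > pi")
       (auto intro: exI[of _ 0] exI[of _ "-1"] exI[of _ 1])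
qed

lemma scaleR_vec_nth_complex: "(r *\<^sub>R (v::complex^'k))$i = complex_of_real r * v$i"
  by (simp only: vector_scaleR_component) (simp add: scaleR_conv_of_real)

lemma cvec_nth [simp]: "cvec a $ j = complex_of_real (a $ j)"
  by (simp add: cvec_def)

lemma cvec_0 [simp]: "cvec 0 = 0"
  by (simp add: vec_eq_iff)

lemma cvec_add: "cvec (a + b) = cvec a + cvec (b::real^'k)"
  by (simp add: vec_eq_iff)

lemma cvec_scaleR: "cvec (r *\<^sub>R a) = r *\<^sub>R cvec (a::real^'k)"
  by (simp add: vec_eq_iff scaleR_vec_nth_complex scaleR_conv_of_real[where 'a=complex])

lemma bounded_linear_cvec: "bounded_linear (cvec :: real^'k \<Rightarrow> complex^'k)"
  by (simp add: linear_conv_bounded_linear[symmetric] linearI cvec_add cvec_scaleR)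

lemma bounded_linear_vector_smult_left: "bounded_linear (\<lambda>c::complex. c *s (v::complex^'k))"
proof -
  have "linear (\<lambda>c::complex. c *s v)"
    by (rule linearI) (simp_all add: vec_eq_iff scaleR_vec_nth_complex distrib_right scaleR_conv_of_real[where 'a=complex])
  then show ?thesis by (simp add: linear_conv_bounded_linear)
qed

lemma hprod_add_left: "hprod (a + b) c = hprod a c + hprod b c"
  by (simp add: hprod_def sum.distrib distrib_right)

lemma hprod_smult_left: "hprod (r *s a) c = r * hprod a c"
  by (simp add: hprod_def sum_distrib_left mult.assoc)

lemma hprod_scaleR_left: "hprod (r *\<^sub>R a) c = complex_of_real r * hprod a c"
  unfolding hprod_def scaleR_vec_nth_complex by (simp add: sum_distrib_left mult.assoc)

lemma hprod_cvec_cvec: "hprod (cvec y) (cvec x) = complex_of_real (y \<bullet> (x::real^'k))"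
  by (simp add: hprod_def inner_vec_def)

lemma isCont_hprod: "isCont A a \<Longrightarrow> isCont B a \<Longrightarrow> isCont (\<lambda>t. hprod (A t) (B t)) a"
  unfolding hprod_def by (intro continuous_intros isCont_vec_nth isCont_cnj)

lemma norm_hprod_cvec_le:
  assumes x: "x \<in> (sphereS::(real^'k) set)"
  shows "cmod (hprod a (cvec x)) \<le> real CARD('k) * norm a"
proof -
  have "cmod (hprod a (cvec x)) \<le> (\<Sum>j\<in>UNIV. cmod (a$j * cnj (cvec x $ j)))"
    unfolding hprod_def by (rule norm_sum)
  also have "\<dots> = (\<Sum>j\<in>UNIV. cmod (a$j) * \<bar>x$j\<bar>)" by (simp add: norm_mult)
  also have "\<dots> \<le> (\<Sum>j\<in>(UNIV::'k set). norm a * 1)"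
    using Finite_Cartesian_Product.norm_nth_le sphereS_abs_component_le[OF x] by (intro sum_mono mult_mono) auto
  finally show ?thesis by simp
qed

definition perp_proj :: "real^'k \<Rightarrow> complex^'k \<Rightarrow> complex^'k" where
  "perp_proj x v = v - hprod v (cvec x) *s cvec x"

lemma perp_proj_add: "perp_proj x (a + b) = perp_proj x a + perp_proj x b"
  by (simp add: perp_proj_def hprod_add_left vector_sadd_rdistrib)

lemma perp_proj_smult: "perp_proj x (c *s a) = c *s perp_proj x a"
  by (simp add: perp_proj_def hprod_smult_left vector_ssub_ldistrib vector_smult_assoc)

lemma perp_proj_cvec: "perp_proj x (cvec y) = cvec (y - (y \<bullet> x) *\<^sub>R (x::real^'k))"
  by (simp add: perp_proj_def vec_eq_iff hprod_cvec_cvec)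

lemma bounded_linear_perp_proj: "bounded_linear (perp_proj (x::real^'k))"
proof -
  have "linear (perp_proj x)"
    by (rule linearI) (simp add: perp_proj_add, simp add: perp_proj_def vec_eq_iff hprod_scaleR_left
        scaleR_vec_nth_complex algebra_simps scaleR_conv_of_real[where 'a=complex])
  then show ?thesis by (simp add: linear_conv_bounded_linear)
qed

lemma has_derivative_scaleR_self:
  fixes \<phi> :: "real \<Rightarrow> 'b::real_normed_vector"
  assumes "isCont \<phi> 0"
  shows "((\<lambda>t. t *\<^sub>R \<phi> t) has_derivative (\<lambda>s. s *\<^sub>R \<phi> 0)) (at 0)"
  unfolding has_derivative_at_within
proof
  show "bounded_linear (\<lambda>s. s *\<^sub>R \<phi> 0)" by (rule bounded_linear_scaleR_left)
  have l: "((\<lambda>y. norm (\<phi> y - \<phi> 0)) \<longlongrightarrow> 0) (at 0)"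
    using assms by (simp add: isCont_def LIM_zero_iff tendsto_norm_zero)
  show "((\<lambda>y. (y *\<^sub>R \<phi> y - 0 *\<^sub>R \<phi> 0 - (y - 0) *\<^sub>R \<phi> 0) /\<^sub>R norm (y - 0)) \<longlongrightarrow> 0) (at 0)"
  proof (rule Lim_null_comparison[OF always_eventually l], rule allI)
    fix y :: real
    have "(y *\<^sub>R \<phi> y - 0 *\<^sub>R \<phi> 0 - (y - 0) *\<^sub>R \<phi> 0) /\<^sub>R norm (y - 0) = (y / \<bar>y\<bar>) *\<^sub>R (\<phi> y - \<phi> 0)"
      by (simp add: scaleR_diff_right divide_inverse mult.commute)
    moreover have "\<bar>y / \<bar>y\<bar>\<bar> \<le> 1" by (cases "y = 0") auto
    ultimately show "norm ((y *\<^sub>R \<phi> y - 0 *\<^sub>R \<phi> 0 - (y - 0) *\<^sub>R \<phi> 0) /\<^sub>R norm (y - 0))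
        \<le> norm (\<phi> y - \<phi> 0)"
      by (simp add: mult_left_le_one_le)
  qed
qed

lemma admissible_liftD:
  assumes "admissible_lift \<eta> I"
  shows "\<eta> > 0" and "\<And>x. x \<in> sphereS \<Longrightarrow> proj_eq (cvec x) (I (x, 0))"
    and "\<And>x u. x \<in> sphereS \<Longrightarrow> u \<in> tangentT (x, 0) \<Longrightarrow>
      frechet_derivative I (at (x, 0)) (J_can u) - \<i> *s frechet_derivative I (at (x, 0)) u
        \<in> {c *s I (x, 0) | c. True}"
  using assms by (simp_all add: admissible_lift_def)

lemma admissible_lift_smooth:
  assumes "admissible_lift \<eta> I"
  obtains U where "open U" "diskT \<eta> \<subseteq> U" "\<And>p. p \<in> U \<Longrightarrow> I differentiable (at p)"
    "\<And>v. continuous_on U (\<lambda>p. frechet_derivative I (at p) v)" "continuous_on U I"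
proof -
  have "\<exists>U. diskT \<eta> \<subseteq> U \<and> smooth_on U I" using assms by (simp add: admissible_lift_def)
  then obtain U where U: "diskT \<eta> \<subseteq> U" "smooth_on U I" by blast
  show ?thesis by (rule that[OF smooth_on_C1(4)[OF U(2)] U(1) smooth_on_C1(1-3)[OF U(2)]])
qed

lemma in_diskT:
  "x \<in> sphereS \<Longrightarrow> \<xi> \<bullet> x = 0 \<Longrightarrow> \<xi> \<in> MR \<Longrightarrow> norm \<xi> < \<eta> \<Longrightarrow> (x, \<xi>) \<in> diskT \<eta>"
  unfolding diskT_def MR_def by auto

text \<open>The coefficient \<open>\<lambda>(x)\<close> with \<open>I(x, 0) = \<lambda>(x) x\<close> on the zero section.\<close>
definition lift_coeff :: "((real^'k) \<times> (real^'k) \<Rightarrow> complex^'k) \<Rightarrow> real^'k \<Rightarrow> complex" where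
  "lift_coeff I x = hprod (I (x, 0)) (cvec x)"

lemma lift_zero_section:
  assumes "admissible_lift \<eta> I" "x \<in> sphereS"
  shows "I (x, 0) = lift_coeff I x *s cvec x" "lift_coeff I x \<noteq> 0"
proof -
  obtain c where c: "c \<noteq> 0" "I (x, 0) = c *s cvec x"
    using admissible_liftD(2)[OF assms] unfolding proj_eq_def by blast
  have "lift_coeff I x = c"
    using assms(2) by (simp add: lift_coeff_def c(2) hprod_smult_left hprod_cvec_cvec sphereS_def)
  then show "I (x, 0) = lift_coeff I x *s cvec x" "lift_coeff I x \<noteq> 0" using c by auto
qed

lemma continuous_on_lift_coeff:
  assumes "admissible_lift \<eta> I"
  shows "continuous_on sphereS (lift_coeff I)"
proof -
  obtain U where U: "diskT \<eta> \<subseteq> U" "continuous_on U I"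
    using admissible_lift_smooth[OF assms] by metis
  have "(\<lambda>x. (x, 0)) ` sphereS \<subseteq> U"
    using U(1) admissible_liftD(1)[OF assms] by (auto intro!: in_diskT subspace_0[OF subspace_MR])
  then have "continuous_on sphereS (\<lambda>x. I (x, 0))"
    by (intro continuous_on_compose2[OF U(2)] continuous_intros)
  then show ?thesis unfolding lift_coeff_def[abs_def] hprod_def
    by (intro continuous_intros linear_continuous_on[OF bounded_linear_cvec])
qed

lemma lift_coeff_lower_bound:
  fixes I :: "(real^'k) \<times> (real^'k) \<Rightarrow> complex^'k"
  assumes "admissible_lift \<eta> I"
  obtains m where "m > 0" "\<And>x. x \<in> sphereS \<Longrightarrow> m \<le> cmod (lift_coeff I x)"
proof (cases "sphereS = ({} :: (real^'k) set)")
  case False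
  obtain x0 where x0: "x0 \<in> sphereS" "\<And>x. x \<in> sphereS \<Longrightarrow> cmod (lift_coeff I x0) \<le> cmod (lift_coeff I x)"
    using continuous_attains_inf[OF compact_sphereS False
        continuous_on_norm[OF continuous_on_lift_coeff[OF assms]]] by auto
  then show ?thesis using lift_zero_section(2)[OF assms x0(1)] by (intro that[of "cmod (lift_coeff I x0)"]) auto
qed (use that[of 1] in auto)

lemma sphereS_curve:
  assumes "x \<in> sphereS" "\<xi> \<bullet> x = 0" "\<xi> \<in> MR" "t\<^sup>2 * (\<xi> \<bullet> \<xi>) < 1"
  shows "sqrt (1 - t\<^sup>2 * (\<xi> \<bullet> \<xi>)) *\<^sub>R x + t *\<^sub>R \<xi> \<in> sphereS"
proof -
  have "sqrt (1 - t\<^sup>2 * (\<xi> \<bullet> \<xi>)) *\<^sub>R x + t *\<^sub>R \<xi> \<in> MR"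
    using assms(1,3) by (simp add: sphereS_eq subspace_add[OF subspace_MR] subspace_mul[OF subspace_MR])
  moreover have "x \<bullet> x = 1" using assms(1) by (simp add: sphereS_def)
  then have "(sqrt (1 - t\<^sup>2 * (\<xi> \<bullet> \<xi>)) *\<^sub>R x + t *\<^sub>R \<xi>) \<bullet> (sqrt (1 - t\<^sup>2 * (\<xi> \<bullet> \<xi>)) *\<^sub>R x + t *\<^sub>R \<xi>) = 1"
    using assms(2,4) by (simp add: inner_add_left inner_add_right inner_commute power2_eq_square
        algebra_simps)
  ultimately show ?thesis by (simp add: sphereS_def MR_def)
qed

text \<open>Along a curve \<open>\<gamma>\<close> in the sphere through \<open>x\<close> with velocity \<open>\<xi>\<close>, the component of
  \<open>I(\<gamma> t, 0) = \<lambda>(\<gamma> t) \<gamma> t\<close> orthogonal to \<open>x\<close> is \<open>t \<lambda>(\<gamma> t) \<xi>\<close>, whose derivative at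
  \<open>0\<close> is \<open>\<lambda>(x) \<xi>\<close>.\<close>
lemma perp_proj_derivative_horizontal:
  assumes adm: "admissible_lift \<eta> I" and x: "x \<in> sphereS"
    and \<xi>: "\<xi> \<bullet> x = 0" "\<xi> \<in> MR"
  shows "perp_proj x (frechet_derivative I (at (x, 0)) (\<xi>, 0)) = lift_coeff I x *s cvec \<xi>"
proof -
  let ?D = "frechet_derivative I (at (x, 0))"
  obtain U where U: "diskT \<eta> \<subseteq> U" "\<And>p. p \<in> U \<Longrightarrow> I differentiable (at p)"
    using admissible_lift_smooth[OF adm] by metis
  have "(x, 0) \<in> U"
    using U(1) x admissible_liftD(1)[OF adm] by (auto intro!: in_diskT subspace_0[OF subspace_MR])
  then have dI: "(I has_derivative ?D) (at (x, 0))" using U(2) frechet_derivative_works by blast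
  have xx: "x \<bullet> x = 1" using x by (simp add: sphereS_def)
  define q where "q = \<xi> \<bullet> \<xi>"
  define \<gamma> where "\<gamma> t = sqrt (1 - t\<^sup>2 * q) *\<^sub>R x + t *\<^sub>R \<xi>" for t :: real
  have curve: "((\<lambda>t. (\<gamma> t, 0::real^'k)) has_derivative (\<lambda>s. (s *\<^sub>R \<xi>, 0))) (at 0)"
    unfolding \<gamma>_def by (auto intro!: derivative_eq_intros)
  have "(I has_derivative ?D) (at (\<gamma> 0, 0))" using dI by (simp add: \<gamma>_def)
  from diff_chain_at[OF curve this]
  have comp: "((\<lambda>t. I (\<gamma> t, 0)) has_derivative (\<lambda>s. ?D (s *\<^sub>R \<xi>, 0))) (at 0)"
    by (simp add: o_def)
  define \<phi> where "\<phi> t = lift_coeff I (\<gamma> t) *s cvec \<xi>" for t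
  have "isCont \<phi> 0"
  proof -
    have "isCont \<gamma> 0" unfolding \<gamma>_def by (intro continuous_intros)
    then have "isCont (\<lambda>t. lift_coeff I (\<gamma> t)) 0"
      unfolding lift_coeff_def
      by (intro isCont_hprod bounded_linear.isCont[OF bounded_linear_cvec] has_derivative_continuous[OF comp])
    then show ?thesis unfolding \<phi>_def by (rule bounded_linear.isCont[OF bounded_linear_vector_smult_left])
  qed
  then have "((\<lambda>t. t *\<^sub>R \<phi> t) has_derivative (\<lambda>s. s *\<^sub>R \<phi> 0)) (at 0)"
    by (rule has_derivative_scaleR_self)
  moreover have "\<forall>\<^sub>F t in at 0. t *\<^sub>R \<phi> t = perp_proj x (I (\<gamma> t, 0))"
  proof -
    have "((\<lambda>t. t\<^sup>2 * q) \<longlongrightarrow> 0) (at (0::real))" by (intro tendsto_eq_intros) auto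
    then have "\<forall>\<^sub>F t in at 0. t\<^sup>2 * q < 1" by (rule order_tendstoD) simp
    then show ?thesis
    proof (rule eventually_mono)
      fix t :: real assume tq: "t\<^sup>2 * q < 1"
      have "\<gamma> t \<in> sphereS" unfolding \<gamma>_def q_def using x \<xi> tq[unfolded q_def] by (rule sphereS_curve)
      then have "perp_proj x (I (\<gamma> t, 0)) = lift_coeff I (\<gamma> t) *s perp_proj x (cvec (\<gamma> t))"
        using lift_zero_section(1)[OF adm] by (simp add: perp_proj_smult)
      also have "perp_proj x (cvec (\<gamma> t)) = cvec (t *\<^sub>R \<xi>)"
        using \<xi>(1) xx by (simp add: perp_proj_cvec \<gamma>_def inner_add_left)
      finally show "t *\<^sub>R \<phi> t = perp_proj x (I (\<gamma> t, 0))"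
        by (simp add: \<phi>_def cvec_scaleR vec_eq_iff scaleR_vec_nth_complex mult.left_commute)
    qed
  qed
  moreover have "0 *\<^sub>R \<phi> 0 = perp_proj x (I (\<gamma> 0, 0))"
    using lift_zero_section(1)[OF adm x] xx by (simp add: \<gamma>_def perp_proj_smult perp_proj_cvec)
  ultimately have "((\<lambda>t. perp_proj x (I (\<gamma> t, 0))) has_derivative (\<lambda>s. s *\<^sub>R \<phi> 0)) (at 0)"
    by (rule has_derivative_transform_eventually) simp_all
  with bounded_linear.has_derivative[OF bounded_linear_perp_proj comp]
  have "(\<lambda>s. perp_proj x (?D (s *\<^sub>R \<xi>, 0))) = (\<lambda>s. s *\<^sub>R \<phi> 0)"
    by (rule has_derivative_unique)
  then have "perp_proj x (?D (1 *\<^sub>R \<xi>, 0)) = 1 *\<^sub>R \<phi> 0" by (rule fun_cong)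
  then show ?thesis by (simp add: \<phi>_def \<gamma>_def)
qed

text \<open>Holomorphicity along the zero section turns the horizontal derivative into the vertical one,
  up to a multiple of \<open>I(x, 0)\<close>, which is parallel to \<open>x\<close>.\<close>
lemma derivative_vertical_decomp:
  assumes adm: "admissible_lift \<eta> I" and x: "x \<in> sphereS"
    and \<xi>: "\<xi> \<bullet> x = 0" "\<xi> \<in> MR"
  shows "frechet_derivative I (at (x, 0)) (0, \<xi>) =
     (\<i> * lift_coeff I x) *s cvec \<xi> + hprod (frechet_derivative I (at (x, 0)) (0, \<xi>)) (cvec x) *s cvec x"
proof -
  let ?D = "frechet_derivative I (at (x, 0))"
  have u: "(\<xi>, 0) \<in> tangentT (x, 0)" unfolding tangentT_def using \<xi> by (simp add: MR_def)
  obtain c where "?D (0, \<xi>) - \<i> *s ?D (\<xi>, 0) = c *s I (x, 0)"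
    using admissible_liftD(3)[OF adm x u] by (auto simp: J_can_def)
  then have e: "?D (0, \<xi>) = \<i> *s ?D (\<xi>, 0) + c *s I (x, 0)" by (simp add: algebra_simps)
  have "perp_proj x (I (x, 0)) = 0"
    using x by (simp add: lift_zero_section(1)[OF adm x] perp_proj_smult perp_proj_cvec sphereS_def)
  then have "perp_proj x (?D (0, \<xi>)) = (\<i> * lift_coeff I x) *s cvec \<xi>"
    unfolding e perp_proj_add perp_proj_smult perp_proj_derivative_horizontal[OF adm x \<xi>]
    by (simp add: vector_smult_assoc)
  then show ?thesis unfolding perp_proj_def by (metis diff_add_cancel)
qed

lemma has_derivative_along_ray:
  assumes "(f has_derivative D) (at (x, t *\<^sub>R v))"
  shows "((\<lambda>t. f (x, t *\<^sub>R v)) has_derivative (\<lambda>h. h *\<^sub>R D (0, v))) (at t)"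
proof -
  have "((\<lambda>t. (x, t *\<^sub>R v)) has_derivative (\<lambda>h. (0, h *\<^sub>R v))) (at t)"
    by (auto intro!: derivative_eq_intros)
  from diff_chain_at[OF this assms]
  have "((\<lambda>t. f (x, t *\<^sub>R v)) has_derivative (\<lambda>h. D (0, h *\<^sub>R v))) (at t)" by (simp add: o_def)
  moreover have "D (0, h *\<^sub>R v) = h *\<^sub>R D (0, v)" for h
    using linear_scale[OF has_derivative_linear[OF assms], of h "(0, v)"] by simp
  ultimately show ?thesis by simp
qed

lemma norm_first_order_remainder_le:
  fixes F :: "real \<Rightarrow> 'b::real_inner"
  assumes "0 < \<epsilon>" and cF: "continuous_on {0..\<epsilon>} F"
    and dF: "\<And>t. t \<in> {0<..<\<epsilon>} \<Longrightarrow> (F has_derivative (\<lambda>h. h *\<^sub>R F' t)) (at t)"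
    and close: "\<And>t. t \<in> {0<..<\<epsilon>} \<Longrightarrow> norm (F' t - F' 0) \<le> e"
  shows "norm (F \<epsilon> - F 0 - \<epsilon> *\<^sub>R F' 0) \<le> \<epsilon> * e"
proof -
  define \<psi> where "\<psi> t = F t - t *\<^sub>R F' 0" for t
  have c\<psi>: "continuous_on {0..\<epsilon>} \<psi>" unfolding \<psi>_def by (intro continuous_intros cF)
  have "(\<psi> has_derivative (\<lambda>h. h *\<^sub>R (F' t - F' 0))) (at t)" if "t \<in> {0<..<\<epsilon>}" for t
    unfolding \<psi>_def using dF[OF that] by (auto intro!: derivative_eq_intros simp: scaleR_diff_right)
  then have "\<exists>t\<in>{0<..<\<epsilon>}. norm (\<psi> \<epsilon> - \<psi> 0) \<le> norm ((\<lambda>h. h *\<^sub>R (F' t - F' 0)) (\<epsilon> - 0))"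
    by (intro mvt_general[OF assms(1) c\<psi>]) simp
  then obtain t where t: "t \<in> {0<..<\<epsilon>}" "norm (\<psi> \<epsilon> - \<psi> 0) \<le> norm (\<epsilon> *\<^sub>R (F' t - F' 0))"
    by auto
  then have "norm (\<psi> \<epsilon> - \<psi> 0) \<le> \<epsilon> * e"
    using close[OF t(1)] assms(1) by (simp add: mult_left_mono order_trans)
  then show ?thesis by (simp add: \<psi>_def algebra_simps)
qed

lemma continuous_on_frechet_derivative_compose:
  fixes f :: "'a::euclidean_space \<Rightarrow> 'b::real_normed_vector"
  assumes df: "\<And>p. p \<in> U \<Longrightarrow> f differentiable (at p)"
    and cD: "\<And>v. continuous_on U (\<lambda>p. frechet_derivative f (at p) v)"
    and g: "continuous_on K g" "g ` K \<subseteq> U" and h: "continuous_on K h"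
  shows "continuous_on K (\<lambda>z. frechet_derivative f (at (g z)) (h z))"
proof -
  have "frechet_derivative f (at (g z)) (h z) = (\<Sum>b\<in>Basis. (h z \<bullet> b) *\<^sub>R frechet_derivative f (at (g z)) b)"
    if "z \<in> K" for z
  proof -
    have lin: "linear (frechet_derivative f (at (g z)))"
      using df g(2) that frechet_derivative_works has_derivative_linear by blast
    have "frechet_derivative f (at (g z)) (h z)
        = frechet_derivative f (at (g z)) (\<Sum>b\<in>Basis. (h z \<bullet> b) *\<^sub>R b)"
      by (simp add: euclidean_representation)
    then show ?thesis using lin by (simp add: linear_sum linear_scale)
  qed
  moreover have "continuous_on K (\<lambda>z. \<Sum>b\<in>Basis. (h z \<bullet> b) *\<^sub>R frechet_derivative f (at (g z)) b)"
    by (intro continuous_intros h continuous_on_compose2[OF cD g(1) g(2)])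
  ultimately show ?thesis by (metis (no_types, lifting) continuous_on_eq)
qed

text \<open>The vertical derivative of \<open>I\<close> is uniformly continuous on the compact set of points
  \<open>(x, s X(x))\<close> with \<open>x \<in> S\<^sup>n\<close> and \<open>0 \<le> s \<le> s\<^sub>1\<close>.\<close>
lemma uniform_first_order_expansion:
  fixes I :: "(real^'k) \<times> (real^'k) \<Rightarrow> complex^'k" and X :: "real^'k \<Rightarrow> real^'k"
  assumes adm: "admissible_lift \<eta> I" and cX: "continuous_on UNIV X"
    and tangent: "\<And>x. x \<in> sphereS \<Longrightarrow> X x \<bullet> x = 0 \<and> X x \<in> MR" and e: "e > 0"
  obtains \<epsilon>1 B where "\<epsilon>1 > 0" "\<And>x. x \<in> sphereS \<Longrightarrow> norm (frechet_derivative I (at (x, 0)) (0, X x)) \<le> B"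
    "\<And>\<epsilon> x. 0 < \<epsilon> \<Longrightarrow> \<epsilon> < \<epsilon>1 \<Longrightarrow> x \<in> sphereS \<Longrightarrow> (x, \<epsilon> *\<^sub>R X x) \<in> diskT \<eta> \<and>
       norm (I (x, \<epsilon> *\<^sub>R X x) - I (x, 0) - \<epsilon> *\<^sub>R frechet_derivative I (at (x, 0)) (0, X x)) \<le> \<epsilon> * e"
proof -
  let ?D = "\<lambda>p. frechet_derivative I (at p)"
  obtain U where U: "diskT \<eta> \<subseteq> U" "\<And>p. p \<in> U \<Longrightarrow> I differentiable (at p)"
    "\<And>v. continuous_on U (\<lambda>p. ?D p v)" "continuous_on U I"
    using admissible_lift_smooth[OF adm] by metis
  obtain M where M: "M > 0" "\<And>x. x \<in> sphereS \<Longrightarrow> norm (X x) \<le> M"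
    using compact_imp_bounded[OF compact_continuous_image[OF continuous_on_subset[OF cX] compact_sphereS]]
    unfolding bounded_pos by auto
  define s1 where "s1 = \<eta> / (2 * M)"
  have s1: "s1 > 0" using admissible_liftD(1)[OF adm] M by (simp add: s1_def)
  have inD: "(x, s *\<^sub>R X x) \<in> diskT \<eta>" if "x \<in> sphereS" "0 \<le> s" "s \<le> s1" for x s
  proof (rule in_diskT[OF that(1)])
    show "(s *\<^sub>R X x) \<bullet> x = 0" "s *\<^sub>R X x \<in> MR"
      using tangent[OF that(1)] by (auto intro: subspace_mul[OF subspace_MR])
    have "norm (s *\<^sub>R X x) \<le> s1 * M" using that M by (simp add: mult_mono)
    also have "\<dots> < \<eta>" using admissible_liftD(1)[OF adm] M by (simp add: s1_def)
    finally show "norm (s *\<^sub>R X x) < \<eta>" .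
  qed
  define K where "K = (sphereS::(real^'k) set) \<times> {0..s1}"
  define Phi where "Phi z = ?D (fst z, snd z *\<^sub>R X (fst z)) (0, X (fst z))" for z
  have "compact K" unfolding K_def by (intro compact_Times compact_sphereS compact_Icc)
  moreover have cPhi: "continuous_on K Phi"
    unfolding Phi_def using inD U(1) unfolding K_def
    by (intro continuous_on_frechet_derivative_compose[OF U(2,3)] continuous_intros
        continuous_on_compose2[OF cX]) auto
  ultimately obtain d where d: "d > 0" "\<And>a b. a \<in> K \<Longrightarrow> b \<in> K \<Longrightarrow> dist b a < d \<Longrightarrow> dist (Phi b) (Phi a) < e"
    using compact_uniformly_continuous e unfolding uniformly_continuous_on_def by metis
  obtain B where B: "\<And>z. z \<in> K \<Longrightarrow> norm (Phi z) \<le> B"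
    using compact_imp_bounded[OF compact_continuous_image[OF cPhi \<open>compact K\<close>]]
    unfolding bounded_iff by auto
  show ?thesis
  proof
    show "min d s1 > 0" using d s1 by simp
    show "norm (?D (x, 0) (0, X x)) \<le> B" if "x \<in> sphereS" for x :: "real^'k"
      using B[of "(x, 0)"] that s1 by (simp add: K_def Phi_def)
    fix \<epsilon> and x :: "real^'k" assume \<epsilon>: "0 < \<epsilon>" "\<epsilon> < min d s1" and x: "x \<in> sphereS"
    show "(x, \<epsilon> *\<^sub>R X x) \<in> diskT \<eta> \<and>
      norm (I (x, \<epsilon> *\<^sub>R X x) - I (x, 0) - \<epsilon> *\<^sub>R ?D (x, 0) (0, X x)) \<le> \<epsilon> * e"
    proof
      show "(x, \<epsilon> *\<^sub>R X x) \<in> diskT \<eta>" using inD[OF x] \<epsilon> by simp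
      have pU: "(x, t *\<^sub>R X x) \<in> U" if "t \<in> {0..\<epsilon>}" for t using inD[OF x] that \<epsilon> U(1) by auto
      have "continuous_on {0..\<epsilon>} (\<lambda>t. I (x, t *\<^sub>R X x))"
        using pU by (intro continuous_on_compose2[OF U(4)] continuous_intros) auto
      moreover have "((\<lambda>t. I (x, t *\<^sub>R X x)) has_derivative (\<lambda>h. h *\<^sub>R Phi (x, t))) (at t)"
        if "t \<in> {0<..<\<epsilon>}" for t
        using U(2)[OF pU[of t]] that frechet_derivative_works
        by (auto simp: Phi_def intro: has_derivative_along_ray)
      moreover have "norm (Phi (x, t) - Phi (x, 0)) \<le> e" if "t \<in> {0<..<\<epsilon>}" for t
        using d(2)[of "(x, 0)" "(x, t)"] that x \<epsilon> s1
        by (auto simp: K_def dist_norm norm_Pair dist_Pair_Pair dist_real_def)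
      ultimately have "norm (I (x, \<epsilon> *\<^sub>R X x) - I (x, 0 *\<^sub>R X x) - \<epsilon> *\<^sub>R Phi (x, 0)) \<le> \<epsilon> * e"
        by (rule norm_first_order_remainder_le[OF \<epsilon>(1)])
      then show "norm (I (x, \<epsilon> *\<^sub>R X x) - I (x, 0) - \<epsilon> *\<^sub>R ?D (x, 0) (0, X x)) \<le> \<epsilon> * e"
        by (simp add: Phi_def)
    qed
  qed
qed

lemma Arg_near_real:
  fixes w :: complex
  assumes wx: "cmod (w - complex_of_real xj) \<le> h" and hk: "h \<le> \<kappa> / 8" and k0: "\<kappa> > 0"
    and small: "\<bar>xj\<bar> \<le> \<kappa> \<Longrightarrow> Im w > 0"
  shows "w \<noteq> 0"
    "\<exists>k::int. \<bar>Arg w - \<bar>Arg w\<bar> - 2 * pi * k\<bar> \<le> 2 * (2 * h / \<kappa>)"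
    "xj > h \<Longrightarrow> \<bar>Arg w\<bar> < pi / 2"
    "xj < - h \<Longrightarrow> \<bar>Arg w\<bar> > pi / 2"
    "xj > \<kappa> \<Longrightarrow> \<bar>Arg w\<bar> \<le> 2 * h / \<kappa>"
    "xj < - \<kappa> \<Longrightarrow> \<bar>Arg w\<bar> \<ge> pi - 2 * h / \<kappa>"
proof -
  have h0: "h \<ge> 0" using wx norm_ge_zero order_trans by blast
  have re: "\<bar>Re w - xj\<bar> \<le> h" using abs_Re_le_cmod[of "w - complex_of_real xj"] wx by simp
  have im: "\<bar>Im w\<bar> \<le> h" using abs_Im_le_cmod[of "w - complex_of_real xj"] wx by simp
  have big: "\<bar>Re w\<bar> \<ge> \<kappa> / 2 \<and> \<bar>Im w\<bar> \<le> (2 * h / \<kappa>) * \<bar>Re w\<bar>" if "\<bar>xj\<bar> > \<kappa>"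
  proof
    show r: "\<bar>Re w\<bar> \<ge> \<kappa> / 2" using that re hk by linarith
    have "(2 * h / \<kappa>) * \<bar>Re w\<bar> \<ge> (2 * h / \<kappa>) * (\<kappa> / 2)"
      using r h0 k0 by (intro mult_left_mono) auto
    also have "(2 * h / \<kappa>) * (\<kappa> / 2) = h" using k0 by simp
    finally show "\<bar>Im w\<bar> \<le> (2 * h / \<kappa>) * \<bar>Re w\<bar>" using im by linarith
  qed
  show w0: "w \<noteq> 0"
  proof (cases "\<bar>xj\<bar> \<le> \<kappa>")
    case True then show ?thesis using small by auto
  next
    case False then show ?thesis using big k0 by auto
  qed
  show "\<exists>k::int. \<bar>Arg w - \<bar>Arg w\<bar> - 2 * pi * k\<bar> \<le> 2 * (2 * h / \<kappa>)"
  proof (rule Arg_close_abs_Arg_mod_2pi[OF w0])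
    show "0 \<le> 2 * h / \<kappa>" using h0 k0 by simp
    show "0 \<le> Im w \<or> \<bar>Im w\<bar> \<le> 2 * h / \<kappa> * \<bar>Re w\<bar>"
      using small big by (cases "\<bar>xj\<bar> \<le> \<kappa>") auto
  qed
  show "\<bar>Arg w\<bar> < pi / 2" if "xj > h"
  proof -
    have "Re w > 0" using that re by linarith
    then show ?thesis using Arg_Re_pos[of w] by simp
  qed
  show "\<bar>Arg w\<bar> > pi / 2" if "xj < - h"
  proof -
    have "\<not> Re w \<ge> 0" using that re by linarith
    then show ?thesis using Arg_Re_nonneg[of w] by linarith
  qed
  show "\<bar>Arg w\<bar> \<le> 2 * h / \<kappa>" if "xj > \<kappa>"
  proof -
    have "Re w > 0" using that re hk k0 by linarith
    then have "\<bar>Arg w\<bar> \<le> \<bar>Im w\<bar> / Re w" by (rule abs_Arg_le_Im_div_Re)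
    also have "\<dots> \<le> 2 * h / \<kappa>"
    proof -
      have "\<bar>Im w\<bar> \<le> (2 * h / \<kappa>) * Re w" using big that k0 \<open>Re w > 0\<close> by auto
      then show ?thesis by (simp only: pos_divide_le_eq[OF \<open>Re w > 0\<close>])
    qed
    finally show ?thesis .
  qed
  show "\<bar>Arg w\<bar> \<ge> pi - 2 * h / \<kappa>" if "xj < - \<kappa>"
  proof -
    have rn: "Re w < 0" using that re hk k0 by linarith
    have ra: "\<bar>Re w\<bar> > 0" using rn by simp
    have "\<bar>Im w\<bar> \<le> (2 * h / \<kappa>) * \<bar>Re w\<bar>" using big that k0 by auto
    then have "\<bar>Im w\<bar> / \<bar>Re w\<bar> \<le> 2 * h / \<kappa>" by (simp only: pos_divide_le_eq[OF ra])
    then show ?thesis using abs_Arg_ge_pi_minus[OF rn] by linarith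
  qed
qed

lemma norm_divide_le_of_lower_bound:
  assumes "0 < m" "m \<le> cmod z" shows "cmod (u / z) \<le> cmod u / m"
proof -
  have "0 < cmod z * m" using assms by (metis mult_pos_pos order_less_le_trans)
  then show ?thesis unfolding norm_divide using assms by (intro divide_left_mono) auto
qed

text \<open>\<open>z\<close> is a coordinate of \<open>I(x, \<epsilon> \<xi>)\<close>, expanded to first order in \<open>\<epsilon>\<close> using
  \<open>I(x, 0) = \<lambda> x\<close> and the decomposition of the vertical derivative.\<close>
lemma normalized_coordinate_bounds:
  fixes lm \<beta> r z D :: complex and xj \<xi>j \<epsilon> m e B B\<beta> :: real
  defines "D \<equiv> \<i> * lm * \<xi>j + \<beta> * xj"
  assumes z: "z = lm * xj + \<epsilon> * D + r"
    and m: "0 < m" "m \<le> cmod lm" and \<epsilon>: "\<epsilon> \<ge> 0"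
    and bounds: "cmod D \<le> B" "cmod \<beta> \<le> B\<beta>" "cmod r \<le> \<epsilon> * e"
  shows "cmod (z / lm - xj) \<le> \<epsilon> * ((B + e) / m)"
    and "Im (z / lm) \<ge> \<epsilon> * (\<xi>j - \<bar>xj\<bar> * B\<beta> / m - e / m)"
proof -
  have lm0: "lm \<noteq> 0" using m by auto
  have "cmod (z / lm - xj) = cmod ((\<epsilon> * D + r) / lm)"
    using lm0 by (simp add: z field_simps)
  also have "\<dots> \<le> cmod (\<epsilon> * D + r) / m" by (rule norm_divide_le_of_lower_bound[OF m])
  also have "\<dots> \<le> (\<epsilon> * B + \<epsilon> * e) / m"
    using norm_triangle_ineq[of "\<epsilon> * D" r] mult_left_mono[OF bounds(1) \<epsilon>] bounds(3) \<epsilon> m(1)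
    by (intro divide_right_mono) (auto simp: norm_mult)
  finally show "cmod (z / lm - xj) \<le> \<epsilon> * ((B + e) / m)" by (simp add: add_divide_distrib algebra_simps)
  define q where "q = \<epsilon> * xj * \<beta> + r"
  have "z / lm = xj + \<i> * (\<epsilon> * \<xi>j) + q / lm"
    using lm0 by (simp add: z D_def q_def field_simps)
  then have "Im (z / lm) = \<epsilon> * \<xi>j + Im (q / lm)" by simp
  moreover have "- Im (q / lm) \<le> cmod (q / lm)" using abs_Im_le_cmod[of "q / lm"] by linarith
  moreover have "cmod (q / lm) \<le> cmod q / m" by (rule norm_divide_le_of_lower_bound[OF m])
  moreover have "cmod q \<le> \<epsilon> * \<bar>xj\<bar> * B\<beta> + \<epsilon> * e"
  proof -
    have "cmod (\<epsilon> * xj * \<beta>) \<le> \<epsilon> * \<bar>xj\<bar> * B\<beta>"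
      using mult_left_mono[OF bounds(2), of "\<epsilon> * \<bar>xj\<bar>"] \<epsilon> by (simp add: norm_mult)
    then show ?thesis using norm_triangle_ineq[of "\<epsilon> * xj * \<beta>" r] bounds(3) by (simp add: q_def)
  qed
  then have "cmod q / m \<le> (\<epsilon> * \<bar>xj\<bar> * B\<beta> + \<epsilon> * e) / m" using m(1) by (simp add: divide_right_mono)
  moreover have "\<epsilon> * (\<xi>j - \<bar>xj\<bar> * B\<beta> / m - e / m) = \<epsilon> * \<xi>j - (\<epsilon> * \<bar>xj\<bar> * B\<beta> + \<epsilon> * e) / m"
    using m(1) by (simp add: field_simps)
  ultimately show "Im (z / lm) \<ge> \<epsilon> * (\<xi>j - \<bar>xj\<bar> * B\<beta> / m - e / m)" by linarith
qed

lemma continuous_on_Lift_L: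
  fixes I :: "(real^'k) \<times> (real^'k) \<Rightarrow> complex^'k"
  assumes adm: "admissible_lift \<eta> I" and cg: "continuous_on UNIV (deriv g)"
    and inD: "\<And>x::real^'k. x \<in> sphereS \<Longrightarrow> (x, \<epsilon> *\<^sub>R grad_f g x) \<in> diskT \<eta>"
  shows "continuous_on sphereS (Lift_L I g \<epsilon>)"
proof -
  obtain U where U: "diskT \<eta> \<subseteq> U" "continuous_on U I"
    using admissible_lift_smooth[OF adm] by metis
  have "continuous_on sphereS (\<lambda>x::real^'k. (x, \<epsilon> *\<^sub>R grad_f g x))"
    by (intro continuous_intros continuous_on_subset[OF continuous_on_grad_f[OF cg]]) auto
  then show ?thesis
    unfolding Lift_L_def[abs_def] using inD U(1) by (intro continuous_on_compose2[OF U(2)]) auto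
qed

lemma lift_coordinate_expansion:
  fixes I :: "(real^'k) \<times> (real^'k) \<Rightarrow> complex^'k"
  assumes adm: "admissible_lift \<eta> I" and cg: "continuous_on UNIV (deriv g)"
  obtains \<epsilon>1 C Bb where "\<epsilon>1 > 0" "C > 0" "Bb \<ge> 0"
    "\<And>\<epsilon> (x::real^'k). 0 < \<epsilon> \<Longrightarrow> \<epsilon> < \<epsilon>1 \<Longrightarrow> x \<in> sphereS \<Longrightarrow> (x, \<epsilon> *\<^sub>R grad_f g x) \<in> diskT \<eta>"
    "\<And>\<epsilon> x j. 0 < \<epsilon> \<Longrightarrow> \<epsilon> < \<epsilon>1 \<Longrightarrow> x \<in> sphereS \<Longrightarrow>
       cmod (Lift_L I g \<epsilon> x $ j / lift_coeff I x - x$j) \<le> \<epsilon> * C \<and>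
       Im (Lift_L I g \<epsilon> x $ j / lift_coeff I x)
         \<ge> \<epsilon> * (grad_f g x $ j - \<bar>x$j\<bar> * Bb - 1 / (4 * real CARD('k)))"
proof -
  let ?K = "real CARD('k)"
  let ?D = "\<lambda>x. frechet_derivative I (at (x, 0)) (0, grad_f g x)"
  obtain m where m: "m > 0" "\<And>x. x \<in> sphereS \<Longrightarrow> m \<le> cmod (lift_coeff I x)"
    using lift_coeff_lower_bound[OF adm] by blast
  define e where "e = m / (4 * ?K)"
  have e: "e > 0" using m by (simp add: e_def)
  have tangent: "grad_f g x \<bullet> x = 0 \<and> grad_f g x \<in> MR" if "x \<in> sphereS" for x :: "real^'k"
    using that inner_grad_f_sphereS grad_f_in_MR by (auto simp: sphereS_eq)
  obtain \<epsilon>1 B where \<epsilon>1: "\<epsilon>1 > 0" and B: "\<And>x. x \<in> sphereS \<Longrightarrow> norm (?D x) \<le> B"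
    and T: "\<And>\<epsilon> x. 0 < \<epsilon> \<Longrightarrow> \<epsilon> < \<epsilon>1 \<Longrightarrow> x \<in> sphereS \<Longrightarrow> (x, \<epsilon> *\<^sub>R grad_f g x) \<in> diskT \<eta> \<and>
       norm (I (x, \<epsilon> *\<^sub>R grad_f g x) - I (x, 0) - \<epsilon> *\<^sub>R ?D x) \<le> \<epsilon> * e"
    using uniform_first_order_expansion[OF adm continuous_on_grad_f[OF cg] tangent e] by metis
  define B0 where "B0 = max B 0"
  have B0: "B0 \<ge> 0" "\<And>x. x \<in> sphereS \<Longrightarrow> norm (?D x) \<le> B0"
    using B unfolding B0_def by force+
  show ?thesis
  proof
    show "\<epsilon>1 > 0" "(B0 + e) / m > 0" "?K * B0 / m \<ge> 0" using \<epsilon>1 B0 e m by auto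
    show "(x, \<epsilon> *\<^sub>R grad_f g x) \<in> diskT \<eta>"
      if "0 < \<epsilon>" "\<epsilon> < \<epsilon>1" "x \<in> sphereS" for \<epsilon> and x :: "real^'k"
      using T[OF that] by blast
    fix \<epsilon> and x :: "real^'k" and j assume \<epsilon>: "0 < \<epsilon>" "\<epsilon> < \<epsilon>1" and x: "x \<in> sphereS"
    define r where "r = I (x, \<epsilon> *\<^sub>R grad_f g x) - I (x, 0) - \<epsilon> *\<^sub>R ?D x"
    define \<beta> where "\<beta> = hprod (?D x) (cvec x)"
    have D: "?D x $ j = \<i> * lift_coeff I x * grad_f g x $ j + \<beta> * x$j"
      by (subst derivative_vertical_decomp[OF adm x tangent[OF x, THEN conjunct1]
            tangent[OF x, THEN conjunct2]]) (simp add: \<beta>_def)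
    have z: "Lift_L I g \<epsilon> x $ j = lift_coeff I x * x$j + \<epsilon> * ?D x $ j + r$j"
      using lift_zero_section(1)[OF adm x]
      by (simp add: r_def Lift_L_def scaleR_vec_nth_complex scaleR_conv_of_real[where 'a=complex])
    have b1: "cmod (?D x $ j) \<le> B0"
      using Finite_Cartesian_Product.norm_nth_le[of "?D x" j] B0(2)[OF x] by linarith
    have b2: "cmod (r$j) \<le> \<epsilon> * e"
      using Finite_Cartesian_Product.norm_nth_le[of r j] T[OF \<epsilon> x] unfolding r_def by linarith
    have b3: "cmod \<beta> \<le> ?K * B0"
      using norm_hprod_cvec_le[OF x, of "?D x"] B0(2)[OF x] unfolding \<beta>_def
      by (auto intro: order_trans mult_left_mono)
    note bounds = normalized_coordinate_bounds[OF z[unfolded D] m(1) m(2)[OF x] less_imp_le[OF \<epsilon>(1)]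
        b1[unfolded D] b3 b2]
    have "\<epsilon> * e / m = \<epsilon> * (1 / (4 * ?K))" using m by (simp add: e_def)
    then show "cmod (Lift_L I g \<epsilon> x $ j / lift_coeff I x - x$j) \<le> \<epsilon> * ((B0 + e) / m) \<and>
        \<epsilon> * (grad_f g x $ j - \<bar>x$j\<bar> * (?K * B0 / m) - 1 / (4 * ?K))
          \<le> Im (Lift_L I g \<epsilon> x $ j / lift_coeff I x)"
      using bounds by (simp add: algebra_simps)
  qed
qed

lemma tor_dist_nonneg: "tor_dist a b \<ge> 0"
  unfolding tor_dist_def by (rule cInf_greatest) auto

lemma tor_dist_le: "tor_dist a b \<le> norm (a - b - (2 * pi) *\<^sub>R (\<chi> j. of_int (k j)) - t *\<^sub>R (ones::real^'k))"
  unfolding tor_dist_def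
  by (rule cInf_lower) (auto intro: bdd_belowI[of _ 0])

lemma abs_Arg_profile_bounds:
  assumes "\<Theta> = (\<chi> j. \<bar>Arg (wj j)\<bar> / pi)"
  shows "0 \<le> \<Theta>$j" "\<Theta>$j \<le> 1"
proof -
  have "\<bar>Arg (wj j)\<bar> \<le> pi" using mpi_less_Arg[of "wj j"] Arg_le_pi[of "wj j"] by auto
  then show "0 \<le> \<Theta>$j" "\<Theta>$j \<le> 1" using assms by auto
qed

lemma unit_cube_coord_span_bounds:
  fixes \<Theta> :: "real^'k"
  assumes th: "\<And>j. 0 \<le> \<Theta>$j \<and> \<Theta>$j \<le> 1"
    and jp: "\<Theta>$jp \<le> b" and jm: "\<Theta>$jm \<ge> 1 - b" and b: "0 \<le> b" "b \<le> 1/4"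
  shows "coord_span \<Theta> \<ge> 1 - 2 * b" "coord_span \<Theta> \<le> 1" "coord_min \<Theta> \<le> b" "coord_min \<Theta> \<ge> 0"
proof -
  show "coord_span \<Theta> \<ge> 1 - 2 * b" using coord_diff_le_span[of \<Theta> jm jp] jp jm by linarith
  obtain i1 where i1: "coord_max \<Theta> = \<Theta>$i1" using coord_max_attained by blast
  obtain i2 where i2: "coord_min \<Theta> = \<Theta>$i2" using coord_min_attained by blast
  show "coord_span \<Theta> \<le> 1" "coord_min \<Theta> \<ge> 0" unfolding coord_span_def using i1 i2 th[of i1] th[of i2] by auto
  show "coord_min \<Theta> \<le> b" using coord_min_le[of \<Theta> jp] jp by linarith
qed

text \<open>As \<open>\<Sum>j x\<^sub>j = 0\<close>, \<open>\<Theta> \<bullet> x = \<Sum>j (\<Theta>\<^sub>j - 1/2) x\<^sub>j\<close>; every term is at most \<open>h/2\<close> and the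
  \<open>j\<^sub>p\<close>-th one is at most \<open>-1/(8(n+2))\<close>.\<close>
lemma inner_nonpos_if_signs_opposed:
  fixes \<Theta> x :: "real^'k"
  assumes x: "x \<in> sphereS"
    and th: "\<And>j. 0 \<le> \<Theta>$j \<and> \<Theta>$j \<le> 1"
    and sg: "\<And>j. (x$j > h \<longrightarrow> \<Theta>$j < 1/2) \<and> (x$j < - h \<longrightarrow> \<Theta>$j > 1/2)"
    and jp: "x$jp \<ge> 1 / (2 * real CARD('k))" "\<Theta>$jp \<le> 1/4"
    and h: "0 \<le> h" "h \<le> 1 / (4 * (real CARD('k))^2)"
  shows "\<Theta> \<bullet> x \<le> 0"
proof -
  let ?K = "real CARD('k)"
  have K1: "?K \<ge> 1" by simp
  have tm: "(\<Theta>$j - 1/2) * x$j \<le> h / 2" for j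
  proof (cases "\<bar>x$j\<bar> \<le> h")
    case True
    have "\<bar>\<Theta>$j - 1/2\<bar> \<le> 1/2" unfolding abs_le_iff using th[of j] by linarith
    then have "\<bar>(\<Theta>$j - 1/2) * x$j\<bar> \<le> 1/2 * h" unfolding abs_mult
      using True by (intro mult_mono) auto
    then show ?thesis by linarith
  next
    case False
    then have "(x$j > h \<and> \<Theta>$j < 1/2) \<or> (x$j < - h \<and> \<Theta>$j > 1/2)" using sg[of j] by auto
    then have "(\<Theta>$j - 1/2) * x$j \<le> 0"
    proof (elim disjE)
      assume a: "x$j > h \<and> \<Theta>$j < 1/2"
      show ?thesis by (rule mult_nonpos_nonneg) (use a h(1) in linarith)+
    next
      assume a: "x$j < - h \<and> \<Theta>$j > 1/2"
      show ?thesis by (rule mult_nonneg_nonpos) (use a h(1) in linarith)+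
    qed
    then show ?thesis using h by linarith
  qed
  have tjp: "(\<Theta>$jp - 1/2) * x$jp \<le> - (1 / (8 * ?K))"
  proof -
    have "(\<Theta>$jp - 1/2) * x$jp \<le> (- 1/4) * x$jp"
      using jp K1 by (intro mult_right_mono) (auto simp: le_divide_eq order_trans[OF _ jp(1)])
    also have "\<dots> \<le> (- 1/4) * (1 / (2 * ?K))" using jp(1) by simp
    finally show ?thesis by simp
  qed
  have "\<Theta> \<bullet> x = (\<Sum>j\<in>UNIV. (\<Theta>$j - 1/2) * x$j)"
    using x by (simp add: sphereS_def inner_vec_def left_diff_distrib sum_subtractf sum_distrib_left[symmetric] sum_divide_distrib[symmetric])
  also have "\<dots> = (\<Theta>$jp - 1/2) * x$jp + (\<Sum>j\<in>UNIV - {jp}. (\<Theta>$j - 1/2) * x$j)"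
    by (simp add: sum.remove)
  also have "\<dots> \<le> - (1 / (8 * ?K)) + (\<Sum>j\<in>(UNIV::'k set) - {jp}. h / 2)"
    by (intro add_mono tjp sum_mono tm)
  also have "\<dots> = - (1 / (8 * ?K)) + (?K - 1) * (h / 2)" by (simp add: card_Diff_singleton)
  also have "\<dots> \<le> 0"
  proof -
    have "(?K - 1) * (h / 2) \<le> ?K * (h / 2)" using h by (simp add: mult_right_mono)
    also have "\<dots> \<le> ?K * (1 / (8 * ?K^2))" using h K1 by (intro mult_left_mono) auto
    also have "\<dots> = 1 / (8 * ?K)" using K1 by (simp add: power2_eq_square)
    finally show ?thesis by linarith
  qed
  finally show ?thesis .
qed

text \<open>Modulo \<open>2\<pi>\<close>, \<open>Arg z\<^sub>j\<close> is \<open>Arg lm + \<pi> \<Theta>\<^sub>j\<close> up to \<open>2a\<close>; the shift \<open>t\<close> along \<open>ones\<close> absorbs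
  \<open>Arg lm\<close> and the offsets of \<open>Pm\<close> and of the rescaling by \<open>1/s\<close>, which costs \<open>4\<pi>a\<close> since \<open>s \<ge> 1 - 2a\<close>.\<close>
lemma tor_dist_ArgV_radial_le:
  fixes z :: "complex^'k" and wj :: "'k \<Rightarrow> complex" and \<Theta> :: "real^'k"
  assumes lm0: "lm \<noteq> 0" and zw: "\<And>j. z$j = lm * wj j" and w0: "\<And>j. wj j \<noteq> 0"
    and Th: "\<Theta> = (\<chi> j. \<bar>Arg (wj j)\<bar> / pi)"
    and err: "\<And>j. \<exists>k::int. \<bar>Arg (wj j) - \<bar>Arg (wj j)\<bar> - 2 * pi * k\<bar> \<le> 2 * a"
    and jp: "\<Theta>$jp \<le> a" and jm: "\<Theta>$jm \<ge> 1 - a" and a: "0 \<le> a" "a \<le> 1/4"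
  shows "tor_dist (ArgV z) (pi *\<^sub>R radial_bdZn (Pm \<Theta>)) \<le> real CARD('k) * (2 * a + 4 * pi * a)"
proof -
  have th: "\<And>j. 0 \<le> \<Theta>$j \<and> \<Theta>$j \<le> 1" using abs_Arg_profile_bounds[OF Th] by blast
  note sp = unit_cube_coord_span_bounds[OF th jp jm a]
  define s where "s = coord_span \<Theta>"
  have s: "s \<ge> 1 - 2 * a" "s \<le> 1" "s \<ge> 1/2" using sp a unfolding s_def by auto
  define c where "c = sum (\<lambda>j. \<Theta>$j) UNIV / real CARD('k)"
  define mn where "mn = coord_min \<Theta>"
  have mn: "0 \<le> mn" "mn \<le> a" using sp unfolding mn_def by auto
  have PmT: "Pm \<Theta> = \<Theta> + (- c) *\<^sub>R ones" by (simp add: Pm_eq c_def)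
  have ss: "coord_span (Pm \<Theta>) = s" unfolding s_def by (rule coord_span_Pm)
  have "\<forall>j. \<exists>k::int. Arg (z$j) = Arg lm + Arg (wj j) + 2 * pi * k"
    using Arg_mult_mod_2pi[OF lm0 w0] zw by metis
  then obtain k1 :: "'k \<Rightarrow> int" where k1: "\<And>j. Arg (z$j) = Arg lm + Arg (wj j) + 2 * pi * k1 j"
    by metis
  obtain k2 :: "'k \<Rightarrow> int" where k2: "\<And>j. \<bar>Arg (wj j) - \<bar>Arg (wj j)\<bar> - 2 * pi * k2 j\<bar> \<le> 2 * a"
    using err by metis
  define t where "t = Arg lm - (pi / s) * (mn - c)"
  define V where "V = ArgV z - pi *\<^sub>R radial_bdZn (Pm \<Theta>) - (2 * pi) *\<^sub>R (\<chi> j. of_int (k1 j + k2 j))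
    - t *\<^sub>R (ones::real^'k)"
  have Vj: "\<bar>V$j\<bar> \<le> 2 * a + 4 * pi * a" for j
  proof -
    have aw: "\<bar>Arg (wj j)\<bar> = pi * \<Theta>$j" unfolding Th by simp
    have "V$j = (Arg (wj j) - \<bar>Arg (wj j)\<bar> - 2 * pi * k2 j) + (pi * \<Theta>$j - (pi / s) * (\<Theta>$j - mn))"
      unfolding V_def ArgV_def radial_bdZn_def ss unfolding PmT t_def using k1[of j] aw
      by (simp add: ones_def algebra_simps add_divide_distrib[symmetric])
    moreover have "\<bar>pi * \<Theta>$j - (pi / s) * (\<Theta>$j - mn)\<bar> \<le> 4 * pi * a"
    proof -
      have e1: "pi * \<Theta>$j - (pi / s) * (\<Theta>$j - mn) = (pi / s) * (mn - \<Theta>$j * (1 - s))"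
        using s by (simp add: field_simps)
      have t1: "0 \<le> \<Theta>$j * (1 - s)" using th[of j] s by simp
      have t2: "\<Theta>$j * (1 - s) \<le> 1 * (2 * a)" using th[of j] s by (intro mult_mono) auto
      have "\<bar>mn - \<Theta>$j * (1 - s)\<bar> \<le> 2 * a" using t1 t2 mn by (simp add: abs_le_iff)
      moreover have "0 < pi / s" "pi / s \<le> 2 * pi" using s by (auto simp: field_simps)
      ultimately have "(pi / s) * \<bar>mn - \<Theta>$j * (1 - s)\<bar> \<le> (2 * pi) * (2 * a)"
        by (intro mult_mono) auto
      then show ?thesis unfolding e1 abs_mult using s by simp
    qed
    ultimately show ?thesis using k2[of j] by linarith
  qed
  have "tor_dist (ArgV z) (pi *\<^sub>R radial_bdZn (Pm \<Theta>)) \<le> norm V"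
    unfolding V_def by (rule tor_dist_le)
  also have "\<dots> \<le> (\<Sum>j\<in>UNIV. \<bar>V$j\<bar>)" by (rule norm_le_l1_cart)
  also have "\<dots> \<le> (\<Sum>j\<in>(UNIV::'k set). 2 * a + 4 * pi * a)" by (intro sum_mono Vj)
  finally show ?thesis by simp
qed

lemma Arg_profile_estimate:
  fixes x :: "real^'k" and w :: "'k \<Rightarrow> complex"
  assumes x: "x \<in> sphereS" and lm: "lm \<noteq> 0"
    and \<kappa>: "0 < \<kappa>" "\<kappa> \<le> 1 / (4 * (real CARD('k))\<^sup>2)" and h: "0 \<le> h" "h \<le> \<kappa> / 8"
    and near: "\<And>j. cmod (w j - x$j) \<le> h" and upper: "\<And>j. \<bar>x$j\<bar> \<le> \<kappa> \<Longrightarrow> Im (w j) > 0"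
  defines "\<Theta> \<equiv> (\<chi> j. \<bar>Arg (w j)\<bar> / pi)"
  shows "coord_span \<Theta> \<ge> 1/2" and "radial_bdZn (Pm \<Theta>) \<bullet> x \<le> 0"
    and "tor_dist (ArgV (\<chi> j. lm * w j)) (pi *\<^sub>R radial_bdZn (Pm \<Theta>))
      \<le> real CARD('k) * (2 + 4 * pi) * (2 * h / \<kappa>)"
proof -
  let ?K = "real CARD('k)"
  define a where "a = 2 * h / \<kappa>"
  have a: "0 \<le> a" "a \<le> 1/4" using h \<kappa> by (auto simp: a_def field_simps)
  have "a / pi \<le> a" using a(1) by (intro divide_left_mono[of 1 pi a, simplified]) (use pi_ge_two in auto)
  have K1: "?K \<ge> 1" by simp
  have "1 / (4 * ?K\<^sup>2) < 1 / (2 * ?K)"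
    by (simp add: field_simps power2_eq_square) (use K1 in arith)
  then have \<kappa>_small: "\<kappa> < 1 / (2 * ?K)" using \<kappa>(2) by linarith
  have arg: "w j \<noteq> 0"
      "\<exists>k::int. \<bar>Arg (w j) - \<bar>Arg (w j)\<bar> - 2 * pi * k\<bar> \<le> 2 * a"
      "x$j > h \<Longrightarrow> \<bar>Arg (w j)\<bar> < pi / 2"
      "x$j < - h \<Longrightarrow> \<bar>Arg (w j)\<bar> > pi / 2"
      "x$j > \<kappa> \<Longrightarrow> \<bar>Arg (w j)\<bar> \<le> a"
      "x$j < - \<kappa> \<Longrightarrow> \<bar>Arg (w j)\<bar> \<ge> pi - a" for j
    using Arg_near_real[of "w j" "x$j" h \<kappa>, OF near h(2) \<kappa>(1) upper] unfolding a_def by auto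
  have \<Theta>j: "\<Theta>$j = \<bar>Arg (w j)\<bar> / pi" for j by (simp add: \<Theta>_def)
  have \<Theta>01: "0 \<le> \<Theta>$j \<and> \<Theta>$j \<le> 1" for j using abs_Arg_profile_bounds[OF \<Theta>_def[THEN meta_eq_to_obj_eq]] by blast
  obtain jp where jp: "x$jp \<ge> 1 / (2 * ?K)" using sphereS_exists_component_ge[OF x] by blast
  obtain jm where jm: "x$jm \<le> - (1 / (2 * ?K))" using sphereS_exists_component_le[OF x] by blast
  have "\<bar>Arg (w jp)\<bar> \<le> a" using arg(5)[of jp] jp \<kappa>_small by linarith
  then have "\<Theta>$jp \<le> a / pi" by (simp add: \<Theta>j divide_right_mono)
  then have \<Theta>jp: "\<Theta>$jp \<le> a" using \<open>a / pi \<le> a\<close> by linarith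
  have "\<bar>Arg (w jm)\<bar> \<ge> pi - a" using arg(6)[of jm] jm \<kappa>_small by linarith
  then have "\<Theta>$jm \<ge> (pi - a) / pi" by (simp add: \<Theta>j divide_right_mono)
  then have \<Theta>jm: "\<Theta>$jm \<ge> 1 - a" using \<open>a / pi \<le> a\<close> by (simp add: diff_divide_distrib)
  note span = unit_cube_coord_span_bounds[OF \<Theta>01 \<Theta>jp \<Theta>jm a]
  show s12: "coord_span \<Theta> \<ge> 1/2" using span(1) a(2) by linarith
  have "\<Theta> \<bullet> x \<le> 0"
  proof (rule inner_nonpos_if_signs_opposed[OF x \<Theta>01 _ jp _ h(1)])
    show "(x$j > h \<longrightarrow> \<Theta>$j < 1/2) \<and> (x$j < - h \<longrightarrow> \<Theta>$j > 1/2)" for j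
      using arg(3,4)[of j] by (auto simp: \<Theta>j field_simps)
    show "\<Theta>$jp \<le> 1/4" using \<Theta>jp a(2) by linarith
    show "h \<le> 1 / (4 * ?K\<^sup>2)" using h(2) \<kappa>(2) \<kappa>(1) by linarith
  qed
  then show "radial_bdZn (Pm \<Theta>) \<bullet> x \<le> 0"
    using s12 x by (simp add: radial_bdZn_def coord_span_Pm inner_Pm_MR sphereS_eq divide_nonpos_pos)
  have "tor_dist (ArgV (\<chi> j. lm * w j)) (pi *\<^sub>R radial_bdZn (Pm \<Theta>)) \<le> ?K * (2 * a + 4 * pi * a)"
    by (rule tor_dist_ArgV_radial_le[OF lm _ arg(1) \<Theta>_def[THEN meta_eq_to_obj_eq] arg(2) \<Theta>jp \<Theta>jm a]) simp
  then show "tor_dist (ArgV (\<chi> j. lm * w j)) (pi *\<^sub>R radial_bdZn (Pm \<Theta>))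
      \<le> ?K * (2 + 4 * pi) * (2 * h / \<kappa>)"
    by (simp add: a_def algebra_simps)
qed

lemma continuous_on_Pm: "continuous_on S f \<Longrightarrow> continuous_on S (\<lambda>x. Pm (f x))"
  unfolding Pm_eq by (intro continuous_intros) auto

lemma continuous_on_radial_Arg_profile:
  fixes w :: "'a::topological_space \<Rightarrow> 'k::finite \<Rightarrow> complex"
  assumes "\<And>x. x \<in> S \<Longrightarrow> Pm (\<chi> j. \<bar>Arg (w x j)\<bar> / pi) \<noteq> 0"
    and "\<And>j. continuous_on S (\<lambda>x. w x j)" and "\<And>x j. x \<in> S \<Longrightarrow> w x j \<noteq> 0"
  shows "continuous_on S (\<lambda>x. radial_bdZn (Pm (\<chi> j. \<bar>Arg (w x j)\<bar> / pi)))"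
proof (rule continuous_on_compose2[OF continuous_on_radial_bdZn])
  have "continuous_on S (\<lambda>x. \<chi> j. \<bar>Arg (w x j)\<bar> / pi)"
    using assms(2,3) by (intro continuous_on_vec_lambda continuous_on_divide continuous_on_const
        continuous_on_abs_Arg) auto
  then show "continuous_on S (\<lambda>x. Pm (\<chi> j. \<bar>Arg (w x j)\<bar> / pi))"
    by (rule continuous_on_Pm)
qed (use assms(1) Pm_in_MR in auto)

text \<open>Where \<open>x\<^sub>j\<close> is small, the gradient of \<open>f\<close> points into the positive \<open>x\<^sub>j\<close> direction
  (\<open>grad_f_component_lower_bound\<close>), which beats the error terms once \<open>\<kappa>\<close> is small.\<close>
lemma lift_coordinates_near_sphere:
  fixes I :: "(real^'k) \<times> (real^'k) \<Rightarrow> complex^'k"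
  assumes d: "0 < \<delta>" "\<delta> < 1 / (4 * real CARD('k))" and ag: "admissible_g \<delta> g"
    and adm: "admissible_lift \<eta> I"
  obtains \<kappa> C \<epsilon>0 where "0 < \<kappa>" "\<kappa> \<le> 1 / (4 * (real CARD('k))\<^sup>2)" "C > 0" "\<epsilon>0 > 0"
    "\<epsilon>0 * C \<le> \<kappa> / 8"
    "\<And>\<epsilon>. 0 < \<epsilon> \<Longrightarrow> \<epsilon> < \<epsilon>0 \<Longrightarrow> continuous_on sphereS (Lift_L I g \<epsilon>)"
    "\<And>\<epsilon> x j. 0 < \<epsilon> \<Longrightarrow> \<epsilon> < \<epsilon>0 \<Longrightarrow> x \<in> sphereS \<Longrightarrow>
       cmod (Lift_L I g \<epsilon> x $ j / lift_coeff I x - x$j) \<le> \<epsilon> * C"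
    "\<And>\<epsilon> x j. 0 < \<epsilon> \<Longrightarrow> \<epsilon> < \<epsilon>0 \<Longrightarrow> x \<in> sphereS \<Longrightarrow> \<bar>x$j\<bar> \<le> \<kappa> \<Longrightarrow>
       Im (Lift_L I g \<epsilon> x $ j / lift_coeff I x) > 0"
proof -
  let ?K = "real CARD('k)"
  have K1: "?K \<ge> 1" by simp
  note cg = admissible_g_deriv(1)[OF ag d(1)]
  obtain \<epsilon>1 C Bb where \<epsilon>1: "\<epsilon>1 > 0" and C: "C > 0" and Bb: "Bb \<ge> 0"
    and inD: "\<And>\<epsilon> (x::real^'k). 0 < \<epsilon> \<Longrightarrow> \<epsilon> < \<epsilon>1 \<Longrightarrow> x \<in> sphereS \<Longrightarrow> (x, \<epsilon> *\<^sub>R grad_f g x) \<in> diskT \<eta>"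
    and exp: "\<And>\<epsilon> x j. 0 < \<epsilon> \<Longrightarrow> \<epsilon> < \<epsilon>1 \<Longrightarrow> x \<in> sphereS \<Longrightarrow>
       cmod (Lift_L I g \<epsilon> x $ j / lift_coeff I x - x$j) \<le> \<epsilon> * C \<and>
       Im (Lift_L I g \<epsilon> x $ j / lift_coeff I x) \<ge> \<epsilon> * (grad_f g x $ j - \<bar>x$j\<bar> * Bb - 1 / (4 * ?K))"
    using lift_coordinate_expansion[OF adm cg] by metis
  define \<kappa> where "\<kappa> = min (\<delta> / 2) (1 / (4 * ?K * (?K + Bb + 1)))"
  have \<kappa>: "\<kappa> > 0" "\<kappa> \<le> \<delta> / 2" using d Bb by (auto simp: \<kappa>_def add_pos_nonneg)
  have \<kappa>_Bb: "\<kappa> * (?K + Bb) \<le> 1 / (4 * ?K)"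
  proof -
    have "\<kappa> * (?K + Bb) \<le> 1 / (4 * ?K * (?K + Bb + 1)) * (?K + Bb + 1)"
      using \<kappa>(1) Bb by (intro mult_mono) (auto simp: \<kappa>_def)
    also have "\<dots> = 1 / (4 * ?K)" using Bb K1 by (simp add: add_pos_nonneg)
    finally show ?thesis .
  qed
  show ?thesis
  proof
    show "0 < \<kappa>" "C > 0" by (fact \<kappa>(1), fact C)
    have "\<kappa> * ?K \<le> 1 / (4 * ?K)" using \<kappa>_Bb \<kappa>(1) Bb by (smt (verit) mult_left_mono)
    then show "\<kappa> \<le> 1 / (4 * ?K\<^sup>2)" using K1 by (simp add: field_simps power2_eq_square)
    show "min \<epsilon>1 (\<kappa> / (8 * C)) > 0" "min \<epsilon>1 (\<kappa> / (8 * C)) * C \<le> \<kappa> / 8"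
      using \<epsilon>1 \<kappa>(1) C by (auto simp: min_def field_simps)
    fix \<epsilon> assume \<epsilon>: "0 < \<epsilon>" "\<epsilon> < min \<epsilon>1 (\<kappa> / (8 * C))"
    then show "continuous_on sphereS (Lift_L I g \<epsilon>)"
      using inD by (intro continuous_on_Lift_L[OF adm cg]) auto
    fix x :: "real^'k" and j assume x: "x \<in> sphereS"
    show "cmod (Lift_L I g \<epsilon> x $ j / lift_coeff I x - x$j) \<le> \<epsilon> * C" using exp[of \<epsilon> x j] \<epsilon> x by auto
    assume xj: "\<bar>x$j\<bar> \<le> \<kappa>"
    have "grad_f g x $ j \<ge> 3 / (4 * ?K) - ?K * \<bar>x$j\<bar>"
      using xj \<kappa>(2) d by (intro grad_f_component_lower_bound[OF ag d x]) auto
    moreover have "\<bar>x$j\<bar> * (?K + Bb) \<le> 1 / (4 * ?K)"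
      using mult_right_mono[OF xj, of "?K + Bb"] Bb \<kappa>_Bb by simp
    ultimately have "grad_f g x $ j - \<bar>x$j\<bar> * Bb - 1 / (4 * ?K) \<ge> 1 / (4 * ?K)"
      by (simp add: algebra_simps)
    moreover have "1 / (4 * ?K) > 0" by simp
    ultimately show "Im (Lift_L I g \<epsilon> x $ j / lift_coeff I x) > 0"
      using exp[of \<epsilon> x j] \<epsilon> x by (smt (verit) mult_pos_pos)
  qed
qed

lemma Arg_lift_near_bdZn:
  fixes I :: "(real^'k) \<times> (real^'k) \<Rightarrow> complex^'k"
  assumes d: "0 < \<delta>" "\<delta> < 1 / (4 * real CARD('k))" and ag: "admissible_g \<delta> g"
    and adm: "admissible_lift \<eta> I"
  obtains p \<epsilon>0 L where "\<epsilon>0 > 0"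
    "\<And>\<epsilon>. 0 < \<epsilon> \<Longrightarrow> \<epsilon> < \<epsilon>0 \<Longrightarrow> continuous_on sphereS (p \<epsilon>) \<and> p \<epsilon> ` sphereS \<subseteq> bdZn \<and>
       (\<forall>x\<in>sphereS. p \<epsilon> x \<bullet> x \<le> 0)"
    "\<And>\<epsilon> x. 0 < \<epsilon> \<Longrightarrow> \<epsilon> < \<epsilon>0 \<Longrightarrow> x \<in> sphereS \<Longrightarrow>
       tor_dist (ArgV (Lift_L I g \<epsilon> x)) (pi *\<^sub>R p \<epsilon> x) \<le> L * \<epsilon>"
proof -
  let ?K = "real CARD('k)"
  obtain \<kappa> C \<epsilon>0 where \<kappa>: "0 < \<kappa>" "\<kappa> \<le> 1 / (4 * ?K\<^sup>2)" and C: "C > 0" and \<epsilon>0: "\<epsilon>0 > 0"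
    "\<epsilon>0 * C \<le> \<kappa> / 8"
    and cont: "\<And>\<epsilon>. 0 < \<epsilon> \<Longrightarrow> \<epsilon> < \<epsilon>0 \<Longrightarrow> continuous_on sphereS (Lift_L I g \<epsilon>)"
    and near: "\<And>\<epsilon> x j. 0 < \<epsilon> \<Longrightarrow> \<epsilon> < \<epsilon>0 \<Longrightarrow> x \<in> sphereS \<Longrightarrow>
       cmod (Lift_L I g \<epsilon> x $ j / lift_coeff I x - x$j) \<le> \<epsilon> * C"
    and upper: "\<And>\<epsilon> x j. 0 < \<epsilon> \<Longrightarrow> \<epsilon> < \<epsilon>0 \<Longrightarrow> x \<in> sphereS \<Longrightarrow> \<bar>x$j\<bar> \<le> \<kappa> \<Longrightarrow>
       Im (Lift_L I g \<epsilon> x $ j / lift_coeff I x) > 0"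
    using lift_coordinates_near_sphere[OF d ag adm] by metis
  define w where "w \<epsilon> x j = Lift_L I g \<epsilon> x $ j / lift_coeff I x" for \<epsilon> x j
  define \<Theta> where "\<Theta> \<epsilon> x = (\<chi> j. \<bar>Arg (w \<epsilon> x j)\<bar> / pi)" for \<epsilon> x
  define p where "p \<epsilon> x = radial_bdZn (Pm (\<Theta> \<epsilon> x))" for \<epsilon> x
  have lift: "Lift_L I g \<epsilon> x = (\<chi> j. lift_coeff I x * w \<epsilon> x j)" if "x \<in> sphereS" for \<epsilon> x
    using lift_zero_section(2)[OF adm that] by (simp add: w_def vec_eq_iff)
  show ?thesis
  proof
    show "\<epsilon>0 > 0" by (fact \<epsilon>0(1))
    fix \<epsilon> assume \<epsilon>: "0 < \<epsilon>" "\<epsilon> < \<epsilon>0"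
    have "\<epsilon> * C \<le> \<epsilon>0 * C" using \<epsilon> C by (intro mult_right_mono) auto
    with \<epsilon>0(2) have h: "0 \<le> \<epsilon> * C" "\<epsilon> * C \<le> \<kappa> / 8" using \<epsilon> C by (simp, linarith)
    have est: "coord_span (\<Theta> \<epsilon> x) \<ge> 1/2" "p \<epsilon> x \<bullet> x \<le> 0"
        "tor_dist (ArgV (\<chi> j. lift_coeff I x * w \<epsilon> x j)) (pi *\<^sub>R p \<epsilon> x)
          \<le> ?K * (2 + 4 * pi) * (2 * (\<epsilon> * C) / \<kappa>)" if x: "x \<in> sphereS" for x
    proof -
      have "cmod (w \<epsilon> x j - x$j) \<le> \<epsilon> * C" "\<bar>x$j\<bar> \<le> \<kappa> \<Longrightarrow> Im (w \<epsilon> x j) > 0" for j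
        using near[OF \<epsilon> x] upper[OF \<epsilon> x] by (simp_all add: w_def)
      from Arg_profile_estimate[OF x lift_zero_section(2)[OF adm x] \<kappa> h this]
      show "coord_span (\<Theta> \<epsilon> x) \<ge> 1/2" "p \<epsilon> x \<bullet> x \<le> 0"
        "tor_dist (ArgV (\<chi> j. lift_coeff I x * w \<epsilon> x j)) (pi *\<^sub>R p \<epsilon> x)
          \<le> ?K * (2 + 4 * pi) * (2 * (\<epsilon> * C) / \<kappa>)"
        by (simp_all add: \<Theta>_def p_def)
    qed
    have Pm_ne0: "Pm (\<Theta> \<epsilon> x) \<noteq> 0" if "x \<in> sphereS" for x
      using est(1)[OF that] coord_span_Pm[of "\<Theta> \<epsilon> x"] coord_span_scaleR[of 0 "0::real^'k"] by auto
    moreover have "continuous_on sphereS (\<lambda>x. w \<epsilon> x j)" for j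
      unfolding w_def using lift_zero_section(2)[OF adm]
      by (intro continuous_intros continuous_on_component cont[OF \<epsilon>] continuous_on_lift_coeff[OF adm])
          blast
    moreover have "w \<epsilon> x j \<noteq> 0" if "x \<in> sphereS" for x j
      using Arg_near_real(1)[of "w \<epsilon> x j" "x$j" "\<epsilon> * C" \<kappa>] near[OF \<epsilon> that] h \<kappa>(1)
        upper[OF \<epsilon> that] by (simp add: w_def)
    ultimately have "continuous_on sphereS (p \<epsilon>)"
      unfolding p_def[abs_def] \<Theta>_def by (rule continuous_on_radial_Arg_profile)
    moreover have "p \<epsilon> x \<in> bdZn" if "x \<in> sphereS" for x
      using Pm_ne0[OF that] by (simp add: p_def radial_bdZn_in_bdZn Pm_in_MR)
    ultimately show "continuous_on sphereS (p \<epsilon>) \<and> p \<epsilon> ` sphereS \<subseteq> bdZn \<and> (\<forall>x\<in>sphereS. p \<epsilon> x \<bullet> x \<le> 0)"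
      using est(2) by blast
    fix x :: "real^'k" assume x: "x \<in> sphereS"
    show "tor_dist (ArgV (Lift_L I g \<epsilon> x)) (pi *\<^sub>R p \<epsilon> x) \<le> ?K * (2 + 4 * pi) * (2 * C / \<kappa>) * \<epsilon>"
    proof -
      have "tor_dist (ArgV (Lift_L I g \<epsilon> x)) (pi *\<^sub>R p \<epsilon> x) \<le> ?K * (2 + 4 * pi) * (2 * (\<epsilon> * C) / \<kappa>)"
        using est(3)[OF x] unfolding lift[OF x] .
      also have "\<dots> = ?K * (2 + 4 * pi) * (2 * C / \<kappa>) * \<epsilon>" by (simp add: field_simps)
      finally show ?thesis .
    qed
  qed
qed

lemma SUP_tendsto_0_at_right:
  fixes F :: "real \<Rightarrow> 'a \<Rightarrow> real"
  assumes "S \<noteq> {}" "\<epsilon>0 > 0"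
    and bound: "\<And>\<epsilon> x. 0 < \<epsilon> \<Longrightarrow> \<epsilon> < \<epsilon>0 \<Longrightarrow> x \<in> S \<Longrightarrow> 0 \<le> F \<epsilon> x \<and> F \<epsilon> x \<le> L * \<epsilon>"
  shows "((\<lambda>\<epsilon>. SUP x\<in>S. F \<epsilon> x) \<longlongrightarrow> 0) (at_right 0)"
proof (rule tendsto_sandwich[where f = "\<lambda>_. 0" and h = "\<lambda>\<epsilon>. L * \<epsilon>"])
  have ev: "\<forall>\<^sub>F \<epsilon> in at_right 0. \<epsilon> \<in> {0<..<\<epsilon>0}" by (rule eventually_at_right_real[OF assms(2)])
  then show "\<forall>\<^sub>F \<epsilon> in at_right 0. 0 \<le> (SUP x\<in>S. F \<epsilon> x)"
  proof eventually_elim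
    case (elim \<epsilon>)
    obtain x where x: "x \<in> S" using assms(1) by blast
    have "bdd_above (F \<epsilon> ` S)" using bound elim by (intro bdd_aboveI2[of _ _ "L * \<epsilon>"]) auto
    then show ?case using bound[of \<epsilon> x] x elim by (intro order_trans[OF _ cSUP_upper[OF x]]) auto
  qed
  show "\<forall>\<^sub>F \<epsilon> in at_right 0. (SUP x\<in>S. F \<epsilon> x) \<le> L * \<epsilon>"
    using ev by eventually_elim (use assms(1) bound in \<open>auto intro: cSUP_least\<close>)
  show "((\<lambda>\<epsilon>. L * \<epsilon>) \<longlongrightarrow> 0) (at_right 0)" by (auto intro!: tendsto_eq_intros)
qed simp

theorem proposition2p14:
  assumes "CARD('k::finite) \<ge> 3"
  shows "\<exists>\<delta>0>0. \<forall>\<delta> g \<eta> (I :: (real^'k) \<times> (real^'k) \<Rightarrow> complex^'k).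
           0 < \<delta> \<and> \<delta> < \<delta>0 \<and> admissible_g \<delta> g \<and> admissible_lift \<eta> I \<longrightarrow>
           (\<exists>p :: real \<Rightarrow> real^'k \<Rightarrow> real^'k. \<exists>\<epsilon>0>0.
              (\<forall>\<epsilon>. 0 < \<epsilon> \<and> \<epsilon> < \<epsilon>0 \<longrightarrow>
                 homotopy_equivalence_map (top_of_set sphereS) (top_of_set bdZn) (p \<epsilon>)) \<and>
              ((\<lambda>\<epsilon>. SUP x\<in>sphereS. tor_dist (ArgV (Lift_L I g \<epsilon> x)) (pi *\<^sub>R p \<epsilon> x))
                 \<longlongrightarrow> 0) (at_right 0))"
proof (intro exI[of _ "1 / (4 * real CARD('k))"] conjI allI impI)
  fix \<delta> g \<eta> and I :: "(real^'k) \<times> (real^'k) \<Rightarrow> complex^'k"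
  assume "0 < \<delta> \<and> \<delta> < 1 / (4 * real CARD('k)) \<and> admissible_g \<delta> g \<and> admissible_lift \<eta> I"
  then obtain p \<epsilon>0 L where \<epsilon>0: "\<epsilon>0 > 0"
    and p: "\<And>\<epsilon>. 0 < \<epsilon> \<Longrightarrow> \<epsilon> < \<epsilon>0 \<Longrightarrow> continuous_on sphereS (p \<epsilon>) \<and> p \<epsilon> ` sphereS \<subseteq> bdZn \<and>
       (\<forall>x\<in>sphereS. p \<epsilon> x \<bullet> x \<le> 0)"
    and dist: "\<And>\<epsilon> x. 0 < \<epsilon> \<Longrightarrow> \<epsilon> < \<epsilon>0 \<Longrightarrow> x \<in> sphereS \<Longrightarrow>
       tor_dist (ArgV (Lift_L I g \<epsilon> x)) (pi *\<^sub>R p \<epsilon> x) \<le> L * \<epsilon>"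
    using Arg_lift_near_bdZn by metis
  have "homotopy_equivalence_map (top_of_set sphereS) (top_of_set bdZn) (p \<epsilon>)"
    if "0 < \<epsilon>" "\<epsilon> < \<epsilon>0" for \<epsilon>
    using p[OF that] by (intro homotopy_equivalence_sphereS_bdZn) auto
  moreover have "((\<lambda>\<epsilon>. SUP x\<in>sphereS. tor_dist (ArgV (Lift_L I g \<epsilon> x)) (pi *\<^sub>R p \<epsilon> x)) \<longlongrightarrow> 0) (at_right 0)"
    using sphereS_nonempty assms \<epsilon>0 dist tor_dist_nonneg by (intro SUP_tendsto_0_at_right) auto
  ultimately show "\<exists>p :: real \<Rightarrow> real^'k \<Rightarrow> real^'k. \<exists>\<epsilon>0>0.
      (\<forall>\<epsilon>. 0 < \<epsilon> \<and> \<epsilon> < \<epsilon>0 \<longrightarrow> homotopy_equivalence_map (top_of_set sphereS) (top_of_set bdZn) (p \<epsilon>)) \<and>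
      ((\<lambda>\<epsilon>. SUP x\<in>sphereS. tor_dist (ArgV (Lift_L I g \<epsilon> x)) (pi *\<^sub>R p \<epsilon> x)) \<longlongrightarrow> 0) (at_right 0)"
    using \<epsilon>0 by blast
qed simp

end
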